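(* Let $R$ be a countable ring, let $A$ be any index set, and let $(M_\alpha)_{\alpha\in A}$ be a family of left $R$-modules. Suppose $B\subseteq A$ is at most countable, that $M_\alpha$ is not algebraically compact for every $\alpha\in B$, and that $M_\alpha$ is algebraically compact for every $\alpha\in A\setminus B$. Then $$\prod_{\alpha\in A}M_\alpha\Big/\bigoplus_{\alpha\in A}M_\alpha$$ is an algebraically compact left $R$-module.
   Context: A left $R$-module $M$ is algebraically compact if every system of linear equations $\sum_{j\in J} r_{ij}x_j=m_i$ ($i\in I$, $r_{ij}\in R$, each row having almost all $r_{ij}=0$, $m_i\in M$, $I,J$ arbitrary sets) whose finite subsystems are all solvable in $M$ is itself solvable in $M$ (equivalently, $M$ is pure injective). *)

theory Defs
  imports "HOL-Algebra.Module" "HOL-Library.Countable_Set"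
begin

text \<open>Same axioms as the library locale module, but over ring instead of cring.\<close>

locale left_module = R?: ring + M?: abelian_group M for M (structure) +
  assumes lsmult_closed:
      "\<lbrakk>a \<in> carrier R; x \<in> carrier M\<rbrakk> \<Longrightarrow> a \<odot>\<^bsub>M\<^esub> x \<in> carrier M"
    and lsmult_l_distr:
      "\<lbrakk>a \<in> carrier R; b \<in> carrier R; x \<in> carrier M\<rbrakk> \<Longrightarrow>
      (a \<oplus> b) \<odot>\<^bsub>M\<^esub> x = a \<odot>\<^bsub>M\<^esub> x \<oplus>\<^bsub>M\<^esub> b \<odot>\<^bsub>M\<^esub> x"
    and lsmult_r_distr:
      "\<lbrakk>a \<in> carrier R; x \<in> carrier M; y \<in> carrier M\<rbrakk> \<Longrightarrow>
      a \<odot>\<^bsub>M\<^esub> (x \<oplus>\<^bsub>M\<^esub> y) = a \<odot>\<^bsub>M\<^esub> x \<oplus>\<^bsub>M\<^esub> a \<odot>\<^bsub>M\<^esub> y"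
    and lsmult_assoc1:
      "\<lbrakk>a \<in> carrier R; b \<in> carrier R; x \<in> carrier M\<rbrakk> \<Longrightarrow>
      (a \<otimes> b) \<odot>\<^bsub>M\<^esub> x = a \<odot>\<^bsub>M\<^esub> (b \<odot>\<^bsub>M\<^esub> x)"
    and lsmult_one:
      "x \<in> carrier M \<Longrightarrow> \<one> \<odot>\<^bsub>M\<^esub> x = x"

text \<open>A system indexed by equations I and unknowns J: row i reads
  sum over j in J of c i j * x_j = m i, with almost all c i j zero.\<close>

definition lin_system ::
  "'r ring \<Rightarrow> ('r, 'b) module \<Rightarrow> 'i set \<Rightarrow> 'j set \<Rightarrow> ('i \<Rightarrow> 'j \<Rightarrow> 'r) \<Rightarrow> ('i \<Rightarrow> 'b) \<Rightarrow> bool" where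
  "lin_system R M I J c m \<longleftrightarrow>
     (\<forall>i\<in>I. (\<forall>j\<in>J. c i j \<in> carrier R) \<and> finite {j \<in> J. c i j \<noteq> \<zero>\<^bsub>R\<^esub>} \<and> m i \<in> carrier M)"

definition solves ::
  "'r ring \<Rightarrow> ('r, 'b) module \<Rightarrow> 'j set \<Rightarrow> ('i \<Rightarrow> 'j \<Rightarrow> 'r) \<Rightarrow> ('i \<Rightarrow> 'b) \<Rightarrow> 'i set \<Rightarrow> ('j \<Rightarrow> 'b) \<Rightarrow> bool" where
  "solves R M J c m I0 x \<longleftrightarrow>
     (\<forall>j\<in>J. x j \<in> carrier M) \<and>
     (\<forall>i\<in>I0. finsum M (\<lambda>j. c i j \<odot>\<^bsub>M\<^esub> x j) {j \<in> J. c i j \<noteq> \<zero>\<^bsub>R\<^esub>} = m i)"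

text \<open>Algebraic compactness with respect to systems whose equation index sets
  live in type 'i and unknown index sets live in type 'j.  (HOL cannot quantify
  over types inside a formula.)\<close>
definition alg_compact_idx ::
  "'i itself \<Rightarrow> 'j itself \<Rightarrow> 'r ring \<Rightarrow> ('r, 'b) module \<Rightarrow> bool" where
  "alg_compact_idx (_ :: 'i itself) (_ :: 'j itself) R M \<longleftrightarrow>
     (\<forall>(I :: 'i set) (J :: 'j set) c m.
        lin_system R M I J c m \<longrightarrow>
        (\<forall>I0 \<subseteq> I. finite I0 \<longrightarrow> (\<exists>x. solves R M J c m I0 x)) \<longrightarrow>
        (\<exists>x. solves R M J c m I x))"

definition prod_module :: "'a set \<Rightarrow> ('a \<Rightarrow> ('r, 'b) module) \<Rightarrow> ('r, 'a \<Rightarrow> 'b) module" where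
  "prod_module A M =
     \<lparr> carrier = {f. (\<forall>\<alpha>\<in>A. f \<alpha> \<in> carrier (M \<alpha>)) \<and> (\<forall>\<alpha>. \<alpha> \<notin> A \<longrightarrow> f \<alpha> = undefined)},
       monoid.mult = undefined, one = undefined,
       zero = (\<lambda>\<alpha>\<in>A. \<zero>\<^bsub>M \<alpha>\<^esub>),
       add = (\<lambda>f g. \<lambda>\<alpha>\<in>A. f \<alpha> \<oplus>\<^bsub>M \<alpha>\<^esub> g \<alpha>),
       smult = (\<lambda>r f. \<lambda>\<alpha>\<in>A. r \<odot>\<^bsub>M \<alpha>\<^esub> f \<alpha>) \<rparr>"

definition dsum_carrier :: "'a set \<Rightarrow> ('a \<Rightarrow> ('r, 'b) module) \<Rightarrow> ('a \<Rightarrow> 'b) set" where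
  "dsum_carrier A M =
     {f \<in> carrier (prod_module A M). finite {\<alpha> \<in> A. f \<alpha> \<noteq> \<zero>\<^bsub>M \<alpha>\<^esub>}}"

definition msum :: "('r, 'b) module \<Rightarrow> 'b set \<Rightarrow> 'b set \<Rightarrow> 'b set" where
  "msum M X Y = {x \<oplus>\<^bsub>M\<^esub> y | x y. x \<in> X \<and> y \<in> Y}"

definition quot_module :: "('r, 'b) module \<Rightarrow> 'b set \<Rightarrow> ('r, 'b set) module" where
  "quot_module M N =
     \<lparr> carrier = {msum M {x} N | x. x \<in> carrier M},
       monoid.mult = undefined, one = undefined,
       zero = N,
       add = msum M,
       smult = (\<lambda>r X. msum M ((\<lambda>x. r \<odot>\<^bsub>M\<^esub> x) ` X) N) \<rparr>"

end

theory Submission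
  imports Defs
begin

text \<open>
  Write \<open>P\<close> for the product, \<open>N\<close> for the direct sum and \<open>Q = P/N\<close>. The proof has two halves.

  First, \<open>Q\<close> is countably compact: every countable finitely solvable system is solvable.
  Lift the right-hand sides to \<open>P\<close> and enumerate the equations. Each finite subsystem is
  solved by a single element of \<open>Q\<close>, hence in all but finitely many coordinates. Every
  coordinate \<open>\<alpha>\<close> gets the longest initial segment of the enumeration it can solve, all of
  it when \<open>M\<^sub>\<alpha>\<close> is algebraically compact and all finite segments are solvable; for
  \<open>\<alpha> \<in> B\<close> the segment is cut off at the position of \<open>\<alpha>\<close> in a numbering of \<open>B\<close>. Then every
  equation is solved in almost all coordinates, i.e. in \<open>Q\<close>.

  Second, over a countable ring countable compactness implies algebraic compactness. By
  Zorn's lemma there is a maximal assignment of values to some unknowns that is compatible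
  with every finite subsystem. For a free unknown, the values compatible with a finite
  subsystem form a coset of a pp-definable subgroup, and since \<open>R\<close> is countable there are
  only countably many such subgroups. A countable subsystem realising all of them has a
  solution whose value at the free unknown is compatible with every finite subsystem, which
  contradicts maximality.
\<close>

section \<open>Left modules\<close>

context left_module
begin

lemma lsmult_l_null: "x \<in> carrier M \<Longrightarrow> \<zero>\<^bsub>R\<^esub> \<odot>\<^bsub>M\<^esub> x = \<zero>\<^bsub>M\<^esub>"
proof -
  assume x: "x \<in> carrier M"
  let ?y = "\<zero>\<^bsub>R\<^esub> \<odot>\<^bsub>M\<^esub> x"
  have y: "?y \<in> carrier M" using x lsmult_closed by simp
  have "?y \<oplus>\<^bsub>M\<^esub> ?y = ?y \<oplus>\<^bsub>M\<^esub> \<zero>\<^bsub>M\<^esub>"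
    using lsmult_l_distr[of "\<zero>\<^bsub>R\<^esub>" "\<zero>\<^bsub>R\<^esub>" x] x y by simp
  then show ?thesis using y by (simp add: M.add.Units_l_cancel)
qed

lemma lsmult_r_null: "a \<in> carrier R \<Longrightarrow> a \<odot>\<^bsub>M\<^esub> \<zero>\<^bsub>M\<^esub> = \<zero>\<^bsub>M\<^esub>"
proof -
  assume a: "a \<in> carrier R"
  let ?y = "a \<odot>\<^bsub>M\<^esub> \<zero>\<^bsub>M\<^esub>"
  have y: "?y \<in> carrier M" using a lsmult_closed by simp
  have "?y \<oplus>\<^bsub>M\<^esub> ?y = ?y \<oplus>\<^bsub>M\<^esub> \<zero>\<^bsub>M\<^esub>"
    using lsmult_r_distr[of a "\<zero>\<^bsub>M\<^esub>" "\<zero>\<^bsub>M\<^esub>"] a y by simp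
  then show ?thesis using y by (simp add: M.add.Units_l_cancel)
qed

lemma trivial_if_one_eq_zero: "\<one>\<^bsub>R\<^esub> = \<zero>\<^bsub>R\<^esub> \<Longrightarrow> x \<in> carrier M \<Longrightarrow> x = \<zero>\<^bsub>M\<^esub>"
  using lsmult_one lsmult_l_null by metis

lemma lincomb_add:
  assumes a: "\<And>j. j \<in> S \<Longrightarrow> a j \<in> carrier R"
    and x: "\<And>j. j \<in> S \<Longrightarrow> x j \<in> carrier M" and y: "\<And>j. j \<in> S \<Longrightarrow> y j \<in> carrier M"
  shows "finsum M (\<lambda>j. a j \<odot>\<^bsub>M\<^esub> (x j \<oplus>\<^bsub>M\<^esub> y j)) S
    = finsum M (\<lambda>j. a j \<odot>\<^bsub>M\<^esub> x j) S \<oplus>\<^bsub>M\<^esub> finsum M (\<lambda>j. a j \<odot>\<^bsub>M\<^esub> y j) S"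
proof -
  have "finsum M (\<lambda>j. a j \<odot>\<^bsub>M\<^esub> (x j \<oplus>\<^bsub>M\<^esub> y j)) S
      = finsum M (\<lambda>j. a j \<odot>\<^bsub>M\<^esub> x j \<oplus>\<^bsub>M\<^esub> a j \<odot>\<^bsub>M\<^esub> y j) S"
    using a x y by (intro M.add.finprod_cong') (auto simp: lsmult_r_distr intro!: lsmult_closed)
  also have "\<dots> = finsum M (\<lambda>j. a j \<odot>\<^bsub>M\<^esub> x j) S \<oplus>\<^bsub>M\<^esub> finsum M (\<lambda>j. a j \<odot>\<^bsub>M\<^esub> y j) S"
    using a x y by (intro M.add.finprod_multf) (auto intro!: lsmult_closed)
  finally show ?thesis .
qed

lemma lincomb_unit_row:
  assumes "j' \<in> J" and "x j' \<in> carrier M"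
  shows "finsum M (\<lambda>j. (if j = j' then \<one>\<^bsub>R\<^esub> else \<zero>\<^bsub>R\<^esub>) \<odot>\<^bsub>M\<^esub> x j)
    {j \<in> J. (if j = j' then \<one>\<^bsub>R\<^esub> else \<zero>\<^bsub>R\<^esub>) \<noteq> \<zero>\<^bsub>R\<^esub>} = x j'"
proof (cases "\<one>\<^bsub>R\<^esub> = \<zero>\<^bsub>R\<^esub>")
  case True
  then show ?thesis using trivial_if_one_eq_zero[OF True assms(2)] by simp
next
  case False
  then have "{j \<in> J. (if j = j' then \<one>\<^bsub>R\<^esub> else \<zero>\<^bsub>R\<^esub>) \<noteq> \<zero>\<^bsub>R\<^esub>} = {j'}" using assms(1) by auto
  then show ?thesis using assms(2) by (simp add: lsmult_one)
qed

lemma lincomb_minus: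
  assumes a: "\<And>j. j \<in> S \<Longrightarrow> a j \<in> carrier R" and x: "\<And>j. j \<in> S \<Longrightarrow> x j \<in> carrier M"
  shows "finsum M (\<lambda>j. a j \<odot>\<^bsub>M\<^esub> (\<ominus>\<^bsub>M\<^esub> x j)) S = \<ominus>\<^bsub>M\<^esub> finsum M (\<lambda>j. a j \<odot>\<^bsub>M\<^esub> x j) S"
proof -
  have "finsum M (\<lambda>j. a j \<odot>\<^bsub>M\<^esub> (\<ominus>\<^bsub>M\<^esub> x j)) S \<oplus>\<^bsub>M\<^esub> finsum M (\<lambda>j. a j \<odot>\<^bsub>M\<^esub> x j) S
      = finsum M (\<lambda>j. a j \<odot>\<^bsub>M\<^esub> (\<ominus>\<^bsub>M\<^esub> x j \<oplus>\<^bsub>M\<^esub> x j)) S"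
    using a x by (intro lincomb_add[symmetric]) auto
  also have "\<dots> = finsum M (\<lambda>j. \<zero>\<^bsub>M\<^esub>) S"
    using a x by (intro M.add.finprod_cong') (auto simp: M.l_neg lsmult_r_null)
  finally show ?thesis
    using a x by (simp add: M.minus_equality M.add.finprod_closed lsmult_closed)
qed

end

section \<open>Linear systems\<close>

abbreviation supp :: "'r ring \<Rightarrow> 'j set \<Rightarrow> ('i \<Rightarrow> 'j \<Rightarrow> 'r) \<Rightarrow> 'i \<Rightarrow> 'j set" where
  "supp R J c i \<equiv> {j \<in> J. c i j \<noteq> \<zero>\<^bsub>R\<^esub>}"

definition countably_compact_idx ::
  "'i itself \<Rightarrow> 'j itself \<Rightarrow> 'r ring \<Rightarrow> ('r, 'b) module \<Rightarrow> bool" where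
  "countably_compact_idx (_ :: 'i itself) (_ :: 'j itself) R M \<longleftrightarrow>
     (\<forall>(I :: 'i set) (J :: 'j set) c m.
        lin_system R M I J c m \<longrightarrow> countable I \<longrightarrow>
        (\<forall>I0 \<subseteq> I. finite I0 \<longrightarrow> (\<exists>x. solves R M J c m I0 x)) \<longrightarrow>
        (\<exists>x. solves R M J c m I x))"

lemma solves_cong_support:
  assumes lm: "left_module R M" and ls: "lin_system R M I J c m" and I0: "I0 \<subseteq> I"
    and x: "solves R M J c m I0 x" and y: "\<forall>j\<in>J. y j \<in> carrier M"
    and agree: "\<And>i j. i \<in> I0 \<Longrightarrow> j \<in> J \<Longrightarrow> c i j \<noteq> \<zero>\<^bsub>R\<^esub> \<Longrightarrow> y j = x j"
  shows "solves R M J c m I0 y"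
proof -
  interpret left_module R M by (rule lm)
  have "finsum M (\<lambda>j. c i j \<odot>\<^bsub>M\<^esub> y j) (supp R J c i) = finsum M (\<lambda>j. c i j \<odot>\<^bsub>M\<^esub> x j) (supp R J c i)"
    if i: "i \<in> I0" for i
    using ls x i I0 agree
    by (intro M.add.finprod_cong') (auto simp: lin_system_def solves_def intro!: lsmult_closed)
  then show ?thesis using x y by (simp add: solves_def)
qed

locale reindexing =
  fixes R :: "'r ring" and M :: "('r, 'b) module" and I :: "'i set" and J :: "'j set"
    and c :: "'i \<Rightarrow> 'j \<Rightarrow> 'r" and m :: "'i \<Rightarrow> 'b" and V :: "'j set"
    and fi :: "'i \<Rightarrow> 'i2" and fj :: "'j \<Rightarrow> 'j2" and c' :: "'i2 \<Rightarrow> 'j2 \<Rightarrow> 'r" and m' :: "'i2 \<Rightarrow> 'b"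
  assumes lm: "left_module R M" and ls: "lin_system R M I J c m"
    and fj: "inj_on fj V" and VJ: "V \<subseteq> J" and supp_V: "\<And>i. i \<in> I \<Longrightarrow> supp R J c i \<subseteq> V"
    and c': "\<And>i j. i \<in> I \<Longrightarrow> j \<in> V \<Longrightarrow> c' (fi i) (fj j) = c i j"
    and m': "\<And>i. i \<in> I \<Longrightarrow> m' (fi i) = m i"
begin

lemma supp_reindex: "i \<in> I \<Longrightarrow> supp R (fj ` V) c' (fi i) = fj ` supp R J c i"
  using supp_V c' VJ by force

lemma lin_system_reindex: "lin_system R M (fi ` I) (fj ` V) c' m'"
  unfolding lin_system_def
proof
  fix i' assume "i' \<in> fi ` I"
  then obtain i where i: "i \<in> I" "i' = fi i" by blast
  then show "(\<forall>j'\<in>fj ` V. c' i' j' \<in> carrier R) \<and> finite (supp R (fj ` V) c' i') \<and> m' i' \<in> carrier M"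
    using ls VJ supp_reindex[OF i(1)] c' m' by (auto simp: lin_system_def)
qed

lemma lincomb_reindex:
  assumes i: "i \<in> I" and x: "\<And>j. j \<in> V \<Longrightarrow> x (fj j) \<in> carrier M"
  shows "finsum M (\<lambda>j'. c' (fi i) j' \<odot>\<^bsub>M\<^esub> x j') (supp R (fj ` V) c' (fi i))
    = finsum M (\<lambda>j. c i j \<odot>\<^bsub>M\<^esub> x (fj j)) (supp R J c i)"
proof -
  interpret left_module R M by (rule lm)
  have cR: "\<And>j. j \<in> J \<Longrightarrow> c i j \<in> carrier R" using ls i by (simp add: lin_system_def)
  have "finsum M (\<lambda>j'. c' (fi i) j' \<odot>\<^bsub>M\<^esub> x j') (fj ` supp R J c i)
      = finsum M (\<lambda>j. c' (fi i) (fj j) \<odot>\<^bsub>M\<^esub> x (fj j)) (supp R J c i)"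
    using supp_V[OF i] c'[OF i] cR x
    by (intro M.add.finprod_reindex inj_on_subset[OF fj]) (auto intro!: lsmult_closed)
  also have "\<dots> = finsum M (\<lambda>j. c i j \<odot>\<^bsub>M\<^esub> x (fj j)) (supp R J c i)"
    using supp_V[OF i] c'[OF i] cR x by (intro M.add.finprod_cong') (auto intro!: lsmult_closed)
  finally show ?thesis using supp_reindex[OF i] by simp
qed

lemma solves_reindex:
  assumes I0: "I0 \<subseteq> I" and x: "solves R M J c m I0 x"
  shows "solves R M (fj ` V) c' m' (fi ` I0) (\<lambda>j'. x (inv_into V fj j'))"
  unfolding solves_def
proof (intro conjI ballI)
  interpret left_module R M by (rule lm)
  fix j' assume "j' \<in> fj ` V"
  then show "x (inv_into V fj j') \<in> carrier M" using x VJ fj by (auto simp: solves_def)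
next
  interpret left_module R M by (rule lm)
  fix i' assume "i' \<in> fi ` I0"
  then obtain i where i: "i \<in> I0" "i' = fi i" by blast
  have iI: "i \<in> I" using i I0 by blast
  have "finsum M (\<lambda>j'. c' (fi i) j' \<odot>\<^bsub>M\<^esub> x (inv_into V fj j')) (supp R (fj ` V) c' (fi i))
      = finsum M (\<lambda>j. c i j \<odot>\<^bsub>M\<^esub> x (inv_into V fj (fj j))) (supp R J c i)"
    using fj x VJ by (intro lincomb_reindex[OF iI]) (auto simp: solves_def)
  also have "\<dots> = finsum M (\<lambda>j. c i j \<odot>\<^bsub>M\<^esub> x j) (supp R J c i)"
    using supp_V[OF iI] fj x ls iI
    by (intro M.add.finprod_cong') (auto simp: solves_def lin_system_def intro!: lsmult_closed)
  finally show "finsum M (\<lambda>j'. c' i' j' \<odot>\<^bsub>M\<^esub> x (inv_into V fj j')) (supp R (fj ` V) c' i') = m' i'"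
    using x i m'[OF iI] by (simp add: solves_def)
qed

lemma solves_unreindex:
  assumes I0: "I0 \<subseteq> I" and x': "solves R M (fj ` V) c' m' (fi ` I0) x'"
  shows "solves R M J c m I0 (\<lambda>j. if j \<in> V then x' (fj j) else \<zero>\<^bsub>M\<^esub>)"
  unfolding solves_def
proof (intro conjI ballI)
  interpret left_module R M by (rule lm)
  have xV: "\<And>j. j \<in> V \<Longrightarrow> x' (fj j) \<in> carrier M" using x' by (simp add: solves_def)
  then show "(if j \<in> V then x' (fj j) else \<zero>\<^bsub>M\<^esub>) \<in> carrier M" for j by simp
  fix i assume i: "i \<in> I0"
  have iI: "i \<in> I" using i I0 by blast
  have "finsum M (\<lambda>j. c i j \<odot>\<^bsub>M\<^esub> (if j \<in> V then x' (fj j) else \<zero>\<^bsub>M\<^esub>)) (supp R J c i)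
      = finsum M (\<lambda>j. c i j \<odot>\<^bsub>M\<^esub> x' (fj j)) (supp R J c i)"
    using supp_V[OF iI] xV ls iI
    by (intro M.add.finprod_cong') (auto simp: lin_system_def intro!: lsmult_closed)
  also have "\<dots> = m i"
    using lincomb_reindex[of i x', OF iI xV] x' i m'[OF iI] by (simp add: solves_def)
  finally show "finsum M (\<lambda>j. c i j \<odot>\<^bsub>M\<^esub> (if j \<in> V then x' (fj j) else \<zero>\<^bsub>M\<^esub>)) (supp R J c i) = m i" .
qed

lemma solvable_reindex:
  "I0 \<subseteq> I \<Longrightarrow> (\<exists>x. solves R M J c m I0 x) \<longleftrightarrow> (\<exists>x. solves R M (fj ` V) c' m' (fi ` I0) x)"
  using solves_reindex solves_unreindex by blast

end

lemma inj_on_into_infinite: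
  assumes "countable S" and "infinite (UNIV :: 'x set)"
  obtains f :: "'a \<Rightarrow> 'x" where "inj_on f S"
proof -
  obtain g :: "'a \<Rightarrow> nat" where "inj_on g S" using assms(1) by (auto simp: countable_def)
  moreover obtain h :: "nat \<Rightarrow> 'x" where "inj h" using infinite_countable_subset[OF assms(2)] by blast
  ultimately show ?thesis using that comp_inj_on inj_on_subset by blast
qed

lemma countably_compact_if_alg_compact:
  assumes lm: "left_module R M" and ac: "alg_compact_idx TYPE('x) TYPE('y) R M"
    and "infinite (UNIV :: 'x set)" and "infinite (UNIV :: 'y set)"
  shows "countably_compact_idx TYPE('i) TYPE('j) R M"
  unfolding countably_compact_idx_def
proof (intro allI impI)
  fix I :: "'i set" and J :: "'j set" and c m
  assume ls: "lin_system R M I J c m" and cI: "countable I"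
    and fs: "\<forall>I0\<subseteq>I. finite I0 \<longrightarrow> (\<exists>x. solves R M J c m I0 x)"
  define V where "V = (\<Union>i\<in>I. supp R J c i)"
  have VJ: "V \<subseteq> J" and supp_V: "\<And>i. i \<in> I \<Longrightarrow> supp R J c i \<subseteq> V" unfolding V_def by auto
  have "countable V" unfolding V_def
    using cI ls by (intro countable_UN) (auto simp: lin_system_def intro: countable_finite)
  obtain fi :: "'i \<Rightarrow> 'x" where fi: "inj_on fi I" using inj_on_into_infinite[OF cI assms(3)] .
  obtain fj :: "'j \<Rightarrow> 'y" where fj: "inj_on fj V" using inj_on_into_infinite[OF \<open>countable V\<close> assms(4)] .
  define c' where "c' i' j' = c (inv_into I fi i') (inv_into V fj j')" for i' j'
  define m' where "m' i' = m (inv_into I fi i')" for i'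
  have c': "\<And>i j. i \<in> I \<Longrightarrow> j \<in> V \<Longrightarrow> c' (fi i) (fj j) = c i j" using fi fj by (simp add: c'_def)
  have m': "\<And>i. i \<in> I \<Longrightarrow> m' (fi i) = m i" using fi by (simp add: m'_def)
  interpret reindexing R M I J c m V fi fj c' m'
    unfolding reindexing_def using lm ls fj VJ supp_V c' m' by blast
  note reindex = solvable_reindex
  have "\<forall>I0'\<subseteq>fi ` I. finite I0' \<longrightarrow> (\<exists>x. solves R M (fj ` V) c' m' I0' x)"
  proof (intro allI impI)
    fix I0' assume "I0' \<subseteq> fi ` I" "finite I0'"
    then obtain I0 where I0: "I0 \<subseteq> I" "finite I0" "I0' = fi ` I0" by (metis finite_subset_image)
    then have "\<exists>x. solves R M J c m I0 x" using fs by blast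
    then show "\<exists>x. solves R M (fj ` V) c' m' I0' x" using reindex[OF I0(1)] I0(3) by simp
  qed
  then have "\<exists>x. solves R M (fj ` V) c' m' (fi ` I) x"
    using ac lin_system_reindex unfolding alg_compact_idx_def by blast
  then show "\<exists>x. solves R M J c m I x" using reindex[OF order_refl] by simp
qed

section \<open>The quotient of a product by the direct sum\<close>

locale module_family =
  fixes R :: "'r ring" and A :: "'a set" and M :: "'a \<Rightarrow> ('r, 'b) module"
  assumes R_ring: "ring R"
    and left_module_M [simp]: "\<And>\<alpha>. \<alpha> \<in> A \<Longrightarrow> left_module R (M \<alpha>)"
begin

abbreviation "P \<equiv> prod_module A M"
abbreviation "N \<equiv> dsum_carrier A M"
abbreviation "Q \<equiv> quot_module P N"
abbreviation "coset u \<equiv> msum P {u} N"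

lemma abelian_group_M [simp]: "\<alpha> \<in> A \<Longrightarrow> abelian_group (M \<alpha>)"
  using left_module_M left_module.axioms(2) by blast

lemma abelian_monoid_M [simp]: "\<alpha> \<in> A \<Longrightarrow> abelian_monoid (M \<alpha>)"
  using abelian_group_M abelian_group.axioms(1) by blast

lemma P_carrier: "f \<in> carrier P \<longleftrightarrow> (\<forall>\<alpha>\<in>A. f \<alpha> \<in> carrier (M \<alpha>)) \<and> (\<forall>\<alpha>. \<alpha> \<notin> A \<longrightarrow> f \<alpha> = undefined)"
  by (simp add: prod_module_def)

lemma P_add: "f \<oplus>\<^bsub>P\<^esub> g = (\<lambda>\<alpha>\<in>A. f \<alpha> \<oplus>\<^bsub>M \<alpha>\<^esub> g \<alpha>)"
  by (simp add: prod_module_def)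

lemma P_zero: "\<zero>\<^bsub>P\<^esub> = (\<lambda>\<alpha>\<in>A. \<zero>\<^bsub>M \<alpha>\<^esub>)"
  by (simp add: prod_module_def)

lemma P_smult: "r \<odot>\<^bsub>P\<^esub> f = (\<lambda>\<alpha>\<in>A. r \<odot>\<^bsub>M \<alpha>\<^esub> f \<alpha>)"
  by (simp add: prod_module_def)

lemma P_restrict_carrier: "(\<lambda>\<alpha>\<in>A. h \<alpha>) \<in> carrier P \<longleftrightarrow> (\<forall>\<alpha>\<in>A. h \<alpha> \<in> carrier (M \<alpha>))"
  unfolding P_carrier by simp

lemma P_abelian_group: "abelian_group P"
proof (rule abelian_groupI)
  fix x y assume "x \<in> carrier P" "y \<in> carrier P"
  then show "x \<oplus>\<^bsub>P\<^esub> y \<in> carrier P"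
    unfolding P_add P_restrict_carrier by (auto simp: P_carrier intro: abelian_monoid.a_closed)
next
  show "\<zero>\<^bsub>P\<^esub> \<in> carrier P"
    unfolding P_zero P_restrict_carrier by (auto intro: abelian_monoid.zero_closed)
next
  fix x y z assume "x \<in> carrier P" "y \<in> carrier P" "z \<in> carrier P"
  then show "(x \<oplus>\<^bsub>P\<^esub> y) \<oplus>\<^bsub>P\<^esub> z = x \<oplus>\<^bsub>P\<^esub> (y \<oplus>\<^bsub>P\<^esub> z)"
    unfolding P_add P_carrier by (auto intro!: ext simp: abelian_monoid.a_assoc)
next
  fix x y assume "x \<in> carrier P" "y \<in> carrier P"
  then show "x \<oplus>\<^bsub>P\<^esub> y = y \<oplus>\<^bsub>P\<^esub> x"
    unfolding P_add P_carrier by (auto intro!: ext simp: abelian_monoid.a_comm)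
next
  fix x assume "x \<in> carrier P"
  then show "\<zero>\<^bsub>P\<^esub> \<oplus>\<^bsub>P\<^esub> x = x"
    unfolding P_add P_zero P_carrier by (auto intro!: ext simp: abelian_monoid.l_zero)
next
  fix x assume x: "x \<in> carrier P"
  show "\<exists>y\<in>carrier P. y \<oplus>\<^bsub>P\<^esub> x = \<zero>\<^bsub>P\<^esub>"
  proof
    show "(\<lambda>\<alpha>\<in>A. \<ominus>\<^bsub>M \<alpha>\<^esub> x \<alpha>) \<in> carrier P"
      unfolding P_restrict_carrier using x by (auto simp: P_carrier intro: abelian_group.a_inv_closed)
    show "(\<lambda>\<alpha>\<in>A. \<ominus>\<^bsub>M \<alpha>\<^esub> x \<alpha>) \<oplus>\<^bsub>P\<^esub> x = \<zero>\<^bsub>P\<^esub>"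
      unfolding P_add P_zero using x by (auto intro!: ext simp: P_carrier abelian_group.l_neg)
  qed
qed

lemma P_left_module: "left_module R P"
proof (intro left_module.intro left_module_axioms.intro)
  show "ring R" by (rule R_ring)
  show "abelian_group P" by (rule P_abelian_group)
next
  fix a x assume "a \<in> carrier R" "x \<in> carrier P"
  then show "a \<odot>\<^bsub>P\<^esub> x \<in> carrier P"
    unfolding P_smult P_restrict_carrier by (auto simp: P_carrier intro!: left_module.lsmult_closed)
next
  fix a b x assume "a \<in> carrier R" "b \<in> carrier R" "x \<in> carrier P"
  then show "(a \<oplus>\<^bsub>R\<^esub> b) \<odot>\<^bsub>P\<^esub> x = a \<odot>\<^bsub>P\<^esub> x \<oplus>\<^bsub>P\<^esub> b \<odot>\<^bsub>P\<^esub> x"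
    unfolding P_smult P_add P_carrier by (auto intro!: ext simp: left_module.lsmult_l_distr)
next
  fix a x y assume "a \<in> carrier R" "x \<in> carrier P" "y \<in> carrier P"
  then show "a \<odot>\<^bsub>P\<^esub> (x \<oplus>\<^bsub>P\<^esub> y) = a \<odot>\<^bsub>P\<^esub> x \<oplus>\<^bsub>P\<^esub> a \<odot>\<^bsub>P\<^esub> y"
    unfolding P_smult P_add P_carrier
    by (intro ext) (auto intro!: left_module.lsmult_r_distr left_module.lsmult_closed abelian_monoid.a_closed)
next
  fix a b x assume "a \<in> carrier R" "b \<in> carrier R" "x \<in> carrier P"
  then show "(a \<otimes>\<^bsub>R\<^esub> b) \<odot>\<^bsub>P\<^esub> x = a \<odot>\<^bsub>P\<^esub> (b \<odot>\<^bsub>P\<^esub> x)"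
    unfolding P_smult P_carrier by (auto intro!: ext simp: left_module.lsmult_assoc1)
next
  fix x assume "x \<in> carrier P"
  then show "\<one>\<^bsub>R\<^esub> \<odot>\<^bsub>P\<^esub> x = x"
    unfolding P_smult P_carrier by (auto intro!: ext simp: left_module.lsmult_one)
qed

lemma P_minus: "x \<in> carrier P \<Longrightarrow> \<ominus>\<^bsub>P\<^esub> x = (\<lambda>\<alpha>\<in>A. \<ominus>\<^bsub>M \<alpha>\<^esub> x \<alpha>)"
proof -
  assume x: "x \<in> carrier P"
  interpret abelian_group P by (rule P_abelian_group)
  have "(\<lambda>\<alpha>\<in>A. \<ominus>\<^bsub>M \<alpha>\<^esub> x \<alpha>) \<in> carrier P"
    unfolding P_restrict_carrier using x by (auto simp: P_carrier intro: abelian_group.a_inv_closed)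
  moreover have "(\<lambda>\<alpha>\<in>A. \<ominus>\<^bsub>M \<alpha>\<^esub> x \<alpha>) \<oplus>\<^bsub>P\<^esub> x = \<zero>\<^bsub>P\<^esub>"
    unfolding P_add P_zero using x by (auto intro!: ext simp: P_carrier abelian_group.l_neg)
  ultimately show ?thesis using minus_equality x by simp
qed

lemma P_finsum_apply:
  assumes "finite S" "f \<in> S \<rightarrow> carrier P" "\<alpha> \<in> A"
  shows "finsum P f S \<alpha> = finsum (M \<alpha>) (\<lambda>j. f j \<alpha>) S"
  using assms(1,2)
proof (induction S rule: finite_induct)
  case empty
  interpret abelian_group P by (rule P_abelian_group)
  interpret Ma: abelian_group "M \<alpha>" using assms(3) by simp
  show ?case using assms(3) by (simp add: P_zero)
next
  case (insert a S)
  interpret abelian_group P by (rule P_abelian_group)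
  interpret Ma: abelian_group "M \<alpha>" using assms(3) by simp
  have fa: "f a \<in> carrier P" and fS: "f \<in> S \<rightarrow> carrier P" using insert by auto
  have "finsum (M \<alpha>) (\<lambda>j. f j \<alpha>) (insert a S) = f a \<alpha> \<oplus>\<^bsub>M \<alpha>\<^esub> finsum (M \<alpha>) (\<lambda>j. f j \<alpha>) S"
    using insert fa fS assms(3) by (intro Ma.add.finprod_insert) (auto simp: P_carrier Pi_def)
  then show ?case using insert fa fS assms(3) by (simp add: P_add add.finprod_insert)
qed

lemma P_lincomb_apply:
  assumes "finite S" and r: "\<And>j. j \<in> S \<Longrightarrow> r j \<in> carrier R"
    and u: "\<And>j. j \<in> S \<Longrightarrow> u j \<in> carrier P" and a: "\<alpha> \<in> A"
  shows "finsum P (\<lambda>j. r j \<odot>\<^bsub>P\<^esub> u j) S \<alpha> = finsum (M \<alpha>) (\<lambda>j. r j \<odot>\<^bsub>M \<alpha>\<^esub> u j \<alpha>) S"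
proof -
  interpret PL: left_module R P by (rule P_left_module)
  interpret Ma: left_module R "M \<alpha>" using a by simp
  have "finsum P (\<lambda>j. r j \<odot>\<^bsub>P\<^esub> u j) S \<alpha> = finsum (M \<alpha>) (\<lambda>j. (r j \<odot>\<^bsub>P\<^esub> u j) \<alpha>) S"
    using assms by (intro P_finsum_apply) (auto intro!: PL.lsmult_closed)
  also have "\<dots> = finsum (M \<alpha>) (\<lambda>j. r j \<odot>\<^bsub>M \<alpha>\<^esub> u j \<alpha>) S"
    using r u a by (intro Ma.add.finprod_cong') (auto simp: P_carrier P_smult intro!: Ma.lsmult_closed)
  finally show ?thesis .
qed

lemma mem_N_iff: "n \<in> N \<longleftrightarrow> n \<in> carrier P \<and> finite {\<alpha> \<in> A. n \<alpha> \<noteq> \<zero>\<^bsub>M \<alpha>\<^esub>}"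
  by (simp add: dsum_carrier_def)

lemma N_subset: "N \<subseteq> carrier P"
  using mem_N_iff by auto

lemma N_zero: "\<zero>\<^bsub>P\<^esub> \<in> N"
proof -
  interpret abelian_group P by (rule P_abelian_group)
  show ?thesis using zero_closed by (simp add: mem_N_iff P_zero)
qed

lemma N_add: assumes "n1 \<in> N" "n2 \<in> N" shows "n1 \<oplus>\<^bsub>P\<^esub> n2 \<in> N"
proof -
  interpret P: abelian_group P by (rule P_abelian_group)
  have c: "n1 \<in> carrier P" "n2 \<in> carrier P" using assms mem_N_iff by auto
  have "{\<alpha> \<in> A. (n1 \<oplus>\<^bsub>P\<^esub> n2) \<alpha> \<noteq> \<zero>\<^bsub>M \<alpha>\<^esub>} \<subseteq> {\<alpha> \<in> A. n1 \<alpha> \<noteq> \<zero>\<^bsub>M \<alpha>\<^esub>} \<union> {\<alpha> \<in> A. n2 \<alpha> \<noteq> \<zero>\<^bsub>M \<alpha>\<^esub>}"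
    using c by (auto simp: P_add P_carrier abelian_monoid.l_zero)
  moreover have "finite ({\<alpha> \<in> A. n1 \<alpha> \<noteq> \<zero>\<^bsub>M \<alpha>\<^esub>} \<union> {\<alpha> \<in> A. n2 \<alpha> \<noteq> \<zero>\<^bsub>M \<alpha>\<^esub>})" using assms mem_N_iff by simp
  ultimately have "finite {\<alpha> \<in> A. (n1 \<oplus>\<^bsub>P\<^esub> n2) \<alpha> \<noteq> \<zero>\<^bsub>M \<alpha>\<^esub>}" by (rule finite_subset)
  then show ?thesis using c mem_N_iff P.a_closed by simp
qed

lemma N_smult: assumes "r \<in> carrier R" "n \<in> N" shows "r \<odot>\<^bsub>P\<^esub> n \<in> N"
proof -
  interpret P: left_module R P by (rule P_left_module)
  have c: "n \<in> carrier P" using assms mem_N_iff by auto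
  have "{\<alpha> \<in> A. (r \<odot>\<^bsub>P\<^esub> n) \<alpha> \<noteq> \<zero>\<^bsub>M \<alpha>\<^esub>} \<subseteq> {\<alpha> \<in> A. n \<alpha> \<noteq> \<zero>\<^bsub>M \<alpha>\<^esub>}"
    using c assms(1) by (auto simp: P_smult P_carrier left_module.lsmult_r_null[OF left_module_M])
  moreover have "finite {\<alpha> \<in> A. n \<alpha> \<noteq> \<zero>\<^bsub>M \<alpha>\<^esub>}" using assms mem_N_iff by simp
  ultimately have "finite {\<alpha> \<in> A. (r \<odot>\<^bsub>P\<^esub> n) \<alpha> \<noteq> \<zero>\<^bsub>M \<alpha>\<^esub>}" by (rule finite_subset)
  then show ?thesis using c assms(1) mem_N_iff P.lsmult_closed by simp
qed

lemma coset_altdef: "coset u = {u \<oplus>\<^bsub>P\<^esub> n | n. n \<in> N}"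
  by (auto simp: msum_def)

lemma coset_self: "u \<in> carrier P \<Longrightarrow> u \<in> coset u"
proof -
  interpret P: abelian_group P by (rule P_abelian_group)
  assume "u \<in> carrier P" then show ?thesis unfolding coset_altdef using N_zero by force
qed

lemma coset_subset: assumes u: "u \<in> carrier P" and v: "v \<in> carrier P"
    and fin: "finite {\<alpha> \<in> A. u \<alpha> \<noteq> v \<alpha>}"
  shows "coset u \<subseteq> coset v"
proof
  interpret P: abelian_group P by (rule P_abelian_group)
  let ?d = "\<ominus>\<^bsub>P\<^esub> v \<oplus>\<^bsub>P\<^esub> u"
  have dc: "?d \<in> carrier P" using u v by simp
  have "{\<alpha> \<in> A. ?d \<alpha> \<noteq> \<zero>\<^bsub>M \<alpha>\<^esub>} \<subseteq> {\<alpha> \<in> A. u \<alpha> \<noteq> v \<alpha>}"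
    using u v by (auto simp: P_add P_minus P_carrier abelian_group.l_neg)
  then have dN: "?d \<in> N" using mem_N_iff dc fin finite_subset by blast
  fix w assume "w \<in> coset u"
  then obtain n where n: "n \<in> N" "w = u \<oplus>\<^bsub>P\<^esub> n" unfolding coset_altdef by blast
  have nc: "n \<in> carrier P" using n mem_N_iff by auto
  have "w = v \<oplus>\<^bsub>P\<^esub> (?d \<oplus>\<^bsub>P\<^esub> n)"
    using n(2) u v nc by (simp add: P.a_assoc[symmetric] P.r_neg)
  moreover have "?d \<oplus>\<^bsub>P\<^esub> n \<in> N" using N_add dN n by blast
  ultimately show "w \<in> coset v" unfolding coset_altdef by blast
qed

lemma coset_eq_iff: assumes u: "u \<in> carrier P" and v: "v \<in> carrier P"
  shows "coset u = coset v \<longleftrightarrow> finite {\<alpha> \<in> A. u \<alpha> \<noteq> v \<alpha>}"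
proof
  interpret P: abelian_group P by (rule P_abelian_group)
  assume "coset u = coset v"
  then have "u \<in> coset v" using coset_self u by auto
  then obtain n where n: "n \<in> N" "u = v \<oplus>\<^bsub>P\<^esub> n" unfolding coset_altdef by blast
  have nc: "n \<in> carrier P" using n mem_N_iff by auto
  have "{\<alpha> \<in> A. u \<alpha> \<noteq> v \<alpha>} \<subseteq> {\<alpha> \<in> A. n \<alpha> \<noteq> \<zero>\<^bsub>M \<alpha>\<^esub>}"
    using n(2) v nc by (auto simp: P_add P_carrier abelian_monoid.r_zero)
  then show "finite {\<alpha> \<in> A. u \<alpha> \<noteq> v \<alpha>}" using n mem_N_iff finite_subset by blast
next
  assume fin: "finite {\<alpha> \<in> A. u \<alpha> \<noteq> v \<alpha>}"
  moreover have "{\<alpha> \<in> A. v \<alpha> \<noteq> u \<alpha>} = {\<alpha> \<in> A. u \<alpha> \<noteq> v \<alpha>}" by auto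
  ultimately have "finite {\<alpha> \<in> A. v \<alpha> \<noteq> u \<alpha>}" by simp
  then show "coset u = coset v" using coset_subset[OF u v fin] coset_subset[OF v u] by blast
qed

lemma Q_carrier: "carrier Q = coset ` carrier P"
  by (auto simp: quot_module_def)

lemma Q_add: "X \<oplus>\<^bsub>Q\<^esub> Y = msum P X Y"
  by (simp add: quot_module_def)

lemma Q_smult: "r \<odot>\<^bsub>Q\<^esub> X = msum P ((\<lambda>x. r \<odot>\<^bsub>P\<^esub> x) ` X) N"
  by (simp add: quot_module_def)

lemma Q_zero_N: "\<zero>\<^bsub>Q\<^esub> = N"
  by (simp add: quot_module_def)

lemma Q_zero: "\<zero>\<^bsub>Q\<^esub> = coset \<zero>\<^bsub>P\<^esub>"
proof -
  interpret P: abelian_group P by (rule P_abelian_group)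
  show ?thesis unfolding Q_zero_N coset_altdef using N_subset by force
qed

lemma coset_add: assumes u: "u \<in> carrier P" and v: "v \<in> carrier P"
  shows "coset u \<oplus>\<^bsub>Q\<^esub> coset v = coset (u \<oplus>\<^bsub>P\<^esub> v)"
proof -
  interpret P: abelian_group P by (rule P_abelian_group)
  show ?thesis unfolding Q_add
  proof (intro equalityI subsetI)
    fix w assume "w \<in> msum P (coset u) (coset v)"
    then obtain n1 n2 where n: "n1 \<in> N" "n2 \<in> N" "w = (u \<oplus>\<^bsub>P\<^esub> n1) \<oplus>\<^bsub>P\<^esub> (v \<oplus>\<^bsub>P\<^esub> n2)"
      unfolding msum_def coset_altdef by blast
    have c: "n1 \<in> carrier P" "n2 \<in> carrier P" using n N_subset by auto
    have "w = u \<oplus>\<^bsub>P\<^esub> (n1 \<oplus>\<^bsub>P\<^esub> (v \<oplus>\<^bsub>P\<^esub> n2))" using n(3) c u v by (simp add: P.a_assoc)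
    also have "n1 \<oplus>\<^bsub>P\<^esub> (v \<oplus>\<^bsub>P\<^esub> n2) = v \<oplus>\<^bsub>P\<^esub> (n1 \<oplus>\<^bsub>P\<^esub> n2)" by (rule P.a_lcomm[OF c(1) v c(2)])
    finally have "w = (u \<oplus>\<^bsub>P\<^esub> v) \<oplus>\<^bsub>P\<^esub> (n1 \<oplus>\<^bsub>P\<^esub> n2)" using c u v by (simp add: P.a_assoc)
    then show "w \<in> coset (u \<oplus>\<^bsub>P\<^esub> v)" unfolding coset_altdef using N_add n by blast
  next
    fix w assume "w \<in> coset (u \<oplus>\<^bsub>P\<^esub> v)"
    then obtain n where n: "n \<in> N" "w = (u \<oplus>\<^bsub>P\<^esub> v) \<oplus>\<^bsub>P\<^esub> n" unfolding coset_altdef by blast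
    have c: "n \<in> carrier P" using n N_subset by auto
    have "w = (u \<oplus>\<^bsub>P\<^esub> \<zero>\<^bsub>P\<^esub>) \<oplus>\<^bsub>P\<^esub> (v \<oplus>\<^bsub>P\<^esub> n)" using n(2) c u v by (simp add: P.a_assoc)
    moreover have "u \<oplus>\<^bsub>P\<^esub> \<zero>\<^bsub>P\<^esub> \<in> coset u" "v \<oplus>\<^bsub>P\<^esub> n \<in> coset v" unfolding coset_altdef using N_zero n by blast+
    ultimately show "w \<in> msum P (coset u) (coset v)" unfolding msum_def by blast
  qed
qed

lemma coset_smult: assumes r: "r \<in> carrier R" and u: "u \<in> carrier P"
  shows "r \<odot>\<^bsub>Q\<^esub> coset u = coset (r \<odot>\<^bsub>P\<^esub> u)"
proof -
  interpret P: left_module R P by (rule P_left_module)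
  show ?thesis unfolding Q_smult
  proof (intro equalityI subsetI)
    fix w assume "w \<in> msum P ((\<lambda>x. r \<odot>\<^bsub>P\<^esub> x) ` coset u) N"
    then obtain n1 n2 where n: "n1 \<in> N" "n2 \<in> N" "w = (r \<odot>\<^bsub>P\<^esub> (u \<oplus>\<^bsub>P\<^esub> n1)) \<oplus>\<^bsub>P\<^esub> n2"
      unfolding msum_def coset_altdef by blast
    have c: "n1 \<in> carrier P" "n2 \<in> carrier P" using n N_subset by auto
    have "w = (r \<odot>\<^bsub>P\<^esub> u) \<oplus>\<^bsub>P\<^esub> ((r \<odot>\<^bsub>P\<^esub> n1) \<oplus>\<^bsub>P\<^esub> n2)"
      using n(3) c u r by (simp add: P.lsmult_r_distr P.lsmult_closed P.a_assoc)
    then show "w \<in> coset (r \<odot>\<^bsub>P\<^esub> u)" unfolding coset_altdef using N_add N_smult n r by blast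
  next
    fix w assume "w \<in> coset (r \<odot>\<^bsub>P\<^esub> u)"
    then obtain n where n: "n \<in> N" "w = (r \<odot>\<^bsub>P\<^esub> u) \<oplus>\<^bsub>P\<^esub> n" unfolding coset_altdef by blast
    have "r \<odot>\<^bsub>P\<^esub> u = r \<odot>\<^bsub>P\<^esub> (u \<oplus>\<^bsub>P\<^esub> \<zero>\<^bsub>P\<^esub>)" using u by simp
    moreover have "u \<oplus>\<^bsub>P\<^esub> \<zero>\<^bsub>P\<^esub> \<in> coset u" unfolding coset_altdef using N_zero by blast
    ultimately show "w \<in> msum P ((\<lambda>x. r \<odot>\<^bsub>P\<^esub> x) ` coset u) N" unfolding msum_def using n by blast
  qed
qed

lemma Q_cases: assumes "X \<in> carrier Q" obtains u where "u \<in> carrier P" "X = coset u"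
  using assms Q_carrier by auto

lemma coset_closed: "u \<in> carrier P \<Longrightarrow> coset u \<in> carrier Q"
  using Q_carrier by auto

lemma Q_abelian_group: "abelian_group Q"
proof -
  interpret P: left_module R P by (rule P_left_module)
  show ?thesis
  proof (rule abelian_groupI)
    fix x y assume "x \<in> carrier Q" "y \<in> carrier Q"
    then obtain u v where "u \<in> carrier P" "v \<in> carrier P" "x = coset u" "y = coset v" by (metis Q_cases)
    then show "x \<oplus>\<^bsub>Q\<^esub> y \<in> carrier Q" by (simp add: coset_add coset_closed)
  next
    show "\<zero>\<^bsub>Q\<^esub> \<in> carrier Q" using Q_zero coset_closed by simp
  next
    fix x y z assume "x \<in> carrier Q" "y \<in> carrier Q" "z \<in> carrier Q"
    then obtain u v w where "u \<in> carrier P" "v \<in> carrier P" "w \<in> carrier P" "x = coset u" "y = coset v" "z = coset w" by (metis Q_cases)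
    then show "x \<oplus>\<^bsub>Q\<^esub> y \<oplus>\<^bsub>Q\<^esub> z = x \<oplus>\<^bsub>Q\<^esub> (y \<oplus>\<^bsub>Q\<^esub> z)"
      by (simp add: coset_add P.a_assoc)
  next
    fix x y assume "x \<in> carrier Q" "y \<in> carrier Q"
    then obtain u v where "u \<in> carrier P" "v \<in> carrier P" "x = coset u" "y = coset v" by (metis Q_cases)
    then show "x \<oplus>\<^bsub>Q\<^esub> y = y \<oplus>\<^bsub>Q\<^esub> x"
      by (simp add: coset_add P.a_comm)
  next
    fix x assume "x \<in> carrier Q"
    then obtain u where "u \<in> carrier P" "x = coset u" by (metis Q_cases)
    then show "\<zero>\<^bsub>Q\<^esub> \<oplus>\<^bsub>Q\<^esub> x = x"
      by (simp add: coset_add Q_zero)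
  next
    fix x assume "x \<in> carrier Q"
    then obtain u where u: "u \<in> carrier P" "x = coset u" by (rule Q_cases)
    show "\<exists>y\<in>carrier Q. y \<oplus>\<^bsub>Q\<^esub> x = \<zero>\<^bsub>Q\<^esub>"
      using u by (intro bexI[of _ "coset (\<ominus>\<^bsub>P\<^esub> u)"]) (auto simp: coset_add Q_zero P.l_neg intro: coset_closed)
  qed
qed

lemma Q_left_module: "left_module R Q"
proof -
  interpret P: left_module R P by (rule P_left_module)
  show ?thesis
  proof (intro left_module.intro left_module_axioms.intro)
    show "ring R" by (rule R_ring)
    show "abelian_group Q" by (rule Q_abelian_group)
  next
    fix a x assume a: "a \<in> carrier R" and "x \<in> carrier Q"
    then obtain u where "u \<in> carrier P" "x = coset u" by (metis Q_cases)
    then show "a \<odot>\<^bsub>Q\<^esub> x \<in> carrier Q" using a by (simp add: coset_smult coset_closed P.lsmult_closed)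
  next
    fix a b x assume ab: "a \<in> carrier R" "b \<in> carrier R" and "x \<in> carrier Q"
    then obtain u where "u \<in> carrier P" "x = coset u" by (metis Q_cases)
    then show "(a \<oplus>\<^bsub>R\<^esub> b) \<odot>\<^bsub>Q\<^esub> x = a \<odot>\<^bsub>Q\<^esub> x \<oplus>\<^bsub>Q\<^esub> b \<odot>\<^bsub>Q\<^esub> x"
      using ab by (simp add: coset_smult coset_add P.lsmult_closed P.lsmult_l_distr)
  next
    fix a x y assume a: "a \<in> carrier R" and "x \<in> carrier Q" "y \<in> carrier Q"
    then obtain u v where "u \<in> carrier P" "v \<in> carrier P" "x = coset u" "y = coset v" by (metis Q_cases)
    then show "a \<odot>\<^bsub>Q\<^esub> (x \<oplus>\<^bsub>Q\<^esub> y) = a \<odot>\<^bsub>Q\<^esub> x \<oplus>\<^bsub>Q\<^esub> a \<odot>\<^bsub>Q\<^esub> y"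
      using a by (simp add: coset_smult coset_add P.lsmult_closed P.lsmult_r_distr)
  next
    fix a b x assume ab: "a \<in> carrier R" "b \<in> carrier R" and "x \<in> carrier Q"
    then obtain u where "u \<in> carrier P" "x = coset u" by (metis Q_cases)
    then show "(a \<otimes>\<^bsub>R\<^esub> b) \<odot>\<^bsub>Q\<^esub> x = a \<odot>\<^bsub>Q\<^esub> (b \<odot>\<^bsub>Q\<^esub> x)"
      using ab by (simp add: coset_smult P.lsmult_closed P.lsmult_assoc1)
  next
    fix x assume "x \<in> carrier Q"
    then obtain u where "u \<in> carrier P" "x = coset u" by (metis Q_cases)
    then show "\<one>\<^bsub>R\<^esub> \<odot>\<^bsub>Q\<^esub> x = x"
      by (simp add: coset_smult P.lsmult_one)
  qed
qed

lemma Q_finsum_coset: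
  assumes "finite S" "f \<in> S \<rightarrow> carrier P"
  shows "finsum Q (\<lambda>j. coset (f j)) S = coset (finsum P f S)"
  using assms
proof (induction S rule: finite_induct)
  case empty
  interpret P: abelian_group P by (rule P_abelian_group)
  interpret abelian_group Q by (rule Q_abelian_group)
  show ?case by (simp add: Q_zero)
next
  case (insert a S)
  interpret P: abelian_group P by (rule P_abelian_group)
  interpret abelian_group Q by (rule Q_abelian_group)
  have "finsum Q (\<lambda>j. coset (f j)) (insert a S) = coset (f a) \<oplus>\<^bsub>Q\<^esub> finsum Q (\<lambda>j. coset (f j)) S"
    using insert coset_closed by (intro add.finprod_insert) auto
  then show ?case using insert coset_add by (simp add: P.add.finprod_insert)
qed

lemma Q_lincomb_eq_coset_iff:
  assumes S: "finite S" and r: "\<And>j. j \<in> S \<Longrightarrow> r j \<in> carrier R"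
    and u: "\<And>j. j \<in> S \<Longrightarrow> u j \<in> carrier P" and v: "v \<in> carrier P"
  shows "finsum Q (\<lambda>j. r j \<odot>\<^bsub>Q\<^esub> coset (u j)) S = coset v
    \<longleftrightarrow> finite {\<alpha> \<in> A. finsum (M \<alpha>) (\<lambda>j. r j \<odot>\<^bsub>M \<alpha>\<^esub> u j \<alpha>) S \<noteq> v \<alpha>}"
proof -
  interpret PL: left_module R P by (rule P_left_module)
  interpret QL: left_module R Q by (rule Q_left_module)
  have "finsum Q (\<lambda>j. r j \<odot>\<^bsub>Q\<^esub> coset (u j)) S = finsum Q (\<lambda>j. coset (r j \<odot>\<^bsub>P\<^esub> u j)) S"
    using r u by (intro QL.add.finprod_cong') (auto simp: coset_smult intro!: coset_closed PL.lsmult_closed)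
  also have "\<dots> = coset (finsum P (\<lambda>j. r j \<odot>\<^bsub>P\<^esub> u j) S)"
    using S r u by (intro Q_finsum_coset) (auto intro!: PL.lsmult_closed)
  finally have "finsum Q (\<lambda>j. r j \<odot>\<^bsub>Q\<^esub> coset (u j)) S = coset v
      \<longleftrightarrow> finite {\<alpha> \<in> A. finsum P (\<lambda>j. r j \<odot>\<^bsub>P\<^esub> u j) S \<alpha> \<noteq> v \<alpha>}"
    using coset_eq_iff[OF _ v] r u by (simp add: PL.add.finprod_closed PL.lsmult_closed Pi_def)
  moreover have "{\<alpha> \<in> A. finsum P (\<lambda>j. r j \<odot>\<^bsub>P\<^esub> u j) S \<alpha> \<noteq> v \<alpha>}
      = {\<alpha> \<in> A. finsum (M \<alpha>) (\<lambda>j. r j \<odot>\<^bsub>M \<alpha>\<^esub> u j \<alpha>) S \<noteq> v \<alpha>}"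
    by (intro Collect_cong conj_cong refl) (simp add: P_lincomb_apply[OF S r u])
  ultimately show ?thesis by simp
qed

end

section \<open>Countable compactness of the quotient\<close>

lemma countable_finite_exhaustion:
  assumes "countable I"
  obtains In :: "nat \<Rightarrow> 'i set"
  where "\<And>n. finite (In n)" "\<And>n. In n \<subseteq> I" "In 0 = {}"
    and "\<And>K. K \<subseteq> I \<Longrightarrow> finite K \<Longrightarrow> \<exists>n. K \<subseteq> In n"
    and "\<And>i. i \<in> I \<Longrightarrow> \<exists>k. \<forall>n>k. i \<in> In n"
proof (cases "I = {}")
  case True
  show ?thesis by (rule that[of "\<lambda>_. {}"]) (use True in auto)
next
  case False
  define e where "e = from_nat_into I"
  have e: "range e = I" using False assms by (simp add: e_def range_from_nat_into)
  show ?thesis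
  proof (rule that[of "\<lambda>n. e ` {..<n}"])
    show "e ` {..<n} \<subseteq> I" for n using e by auto
    show "\<exists>n. K \<subseteq> e ` {..<n}" if K: "K \<subseteq> I" "finite K" for K
    proof -
      have "K \<subseteq> range e" using K(1) e by simp
      then obtain N where N: "finite N" "K = e ` N" by (metis finite_subset_image[OF K(2)])
      then obtain n where "N \<subseteq> {..<n}" using finite_nat_iff_bounded by blast
      then show ?thesis unfolding N(2) by (blast intro: image_mono)
    qed
    show "\<exists>k. \<forall>n>k. i \<in> e ` {..<n}" if "i \<in> I" for i
      using that e by auto
  qed simp_all
qed

lemma finite_to_nat_on_le: "countable B \<Longrightarrow> finite {\<alpha> \<in> B. to_nat_on B \<alpha> \<le> k}"
  by (rule finite_imageD[of "to_nat_on B"])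
     (auto intro: finite_subset[of _ "{..k}"] inj_on_subset[OF inj_on_to_nat_on])

lemma cofinite_choice:
  fixes S :: "'a \<Rightarrow> 'i set \<Rightarrow> bool"
  assumes cI: "countable I" and cB: "countable B"
    and mono: "\<And>\<alpha> K K'. S \<alpha> K' \<Longrightarrow> K \<subseteq> K' \<Longrightarrow> S \<alpha> K"
    and empty: "\<And>\<alpha>. \<alpha> \<in> A \<Longrightarrow> S \<alpha> {}"
    and fin: "\<And>K. K \<subseteq> I \<Longrightarrow> finite K \<Longrightarrow> finite {\<alpha> \<in> A. \<not> S \<alpha> K}"
    and compact: "\<And>\<alpha>. \<alpha> \<in> A - B \<Longrightarrow> \<forall>K\<subseteq>I. finite K \<longrightarrow> S \<alpha> K \<Longrightarrow> S \<alpha> I"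
  obtains K where "\<And>\<alpha>. \<alpha> \<in> A \<Longrightarrow> S \<alpha> (K \<alpha>)" and "\<And>i. i \<in> I \<Longrightarrow> finite {\<alpha> \<in> A. i \<notin> K \<alpha>}"
proof -
  obtain In :: "nat \<Rightarrow> 'i set" where In_finite: "\<And>n. finite (In n)" and In_I: "\<And>n. In n \<subseteq> I"
    and In_0: "In 0 = {}" and In_cofinal: "\<And>K. K \<subseteq> I \<Longrightarrow> finite K \<Longrightarrow> \<exists>n. K \<subseteq> In n"
    and In_eventually: "\<And>i. i \<in> I \<Longrightarrow> \<exists>k. \<forall>n>k. i \<in> In n"
    using countable_finite_exhaustion[OF cI] by blast
  define h where "h = to_nat_on B"
  \<comment> \<open>For \<open>\<alpha> \<in> B\<close> the stage is cut off at \<open>h \<alpha>\<close>, so that only finitely many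
    \<open>\<alpha> \<in> B\<close> are cut off before any given stage.\<close>
  define stop where "stop \<alpha> n \<longleftrightarrow> \<not> S \<alpha> (In (Suc n)) \<or> (\<alpha> \<in> B \<and> n = h \<alpha>)" for \<alpha> n
  define K where "K \<alpha> = (if S \<alpha> I then I else In (LEAST n. stop \<alpha> n))" for \<alpha>
  have stops: "stop \<alpha> (LEAST n. stop \<alpha> n)" if "\<alpha> \<in> A" "\<not> S \<alpha> I" for \<alpha>
  proof (rule LeastI_ex)
    show "\<exists>n. stop \<alpha> n"
    proof (cases "\<alpha> \<in> B")
      case False
      then have "\<not> (\<forall>K\<subseteq>I. finite K \<longrightarrow> S \<alpha> K)" using compact[of \<alpha>] that by blast
      then obtain K0 where "K0 \<subseteq> I" "finite K0" "\<not> S \<alpha> K0" by blast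
      moreover obtain n where "K0 \<subseteq> In n" using In_cofinal calculation(1,2) by blast
      ultimately have n: "\<not> S \<alpha> (In n)" using mono by blast
      then have "n \<noteq> 0" using empty[OF \<open>\<alpha> \<in> A\<close>] In_0 by (cases n) auto
      then show ?thesis using n unfolding stop_def by (metis not0_implies_Suc)
    qed (auto simp: stop_def)
  qed
  have "S \<alpha> (K \<alpha>)" if "\<alpha> \<in> A" for \<alpha>
  proof (cases "S \<alpha> I")
    case False
    have "S \<alpha> (In (Suc n))" if "n < (LEAST n. stop \<alpha> n)" for n
      using not_less_Least[OF that] unfolding stop_def by blast
    then show ?thesis using False empty[OF \<open>\<alpha> \<in> A\<close>] In_0 unfolding K_def
      by (cases "LEAST n. stop \<alpha> n") auto
  qed (simp add: K_def)
  moreover have "finite {\<alpha> \<in> A. i \<notin> K \<alpha>}" if "i \<in> I" for i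
  proof -
    obtain k where k: "\<And>n. k < n \<Longrightarrow> i \<in> In n" using In_eventually[OF \<open>i \<in> I\<close>] by blast
    have "{\<alpha> \<in> A. i \<notin> K \<alpha>} \<subseteq> (\<Union>n\<le>k. {\<alpha> \<in> A. \<not> S \<alpha> (In (Suc n))}) \<union> {\<alpha> \<in> B. h \<alpha> \<le> k}"
    proof
      fix \<alpha> assume "\<alpha> \<in> {\<alpha> \<in> A. i \<notin> K \<alpha>}"
      then have \<alpha>: "\<alpha> \<in> A" "\<not> S \<alpha> I" "i \<notin> In (LEAST n. stop \<alpha> n)"
        using \<open>i \<in> I\<close> by (auto simp: K_def split: if_splits)
      then have "(LEAST n. stop \<alpha> n) \<le> k" using k not_le by blast
      then show "\<alpha> \<in> (\<Union>n\<le>k. {\<alpha> \<in> A. \<not> S \<alpha> (In (Suc n))}) \<union> {\<alpha> \<in> B. h \<alpha> \<le> k}"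
        using stops[OF \<alpha>(1,2)] \<alpha>(1) unfolding stop_def by auto
    qed
    moreover have "finite (\<Union>n\<le>k. {\<alpha> \<in> A. \<not> S \<alpha> (In (Suc n))})"
      using fin In_I In_finite by simp
    ultimately show ?thesis using finite_to_nat_on_le[OF cB] unfolding h_def by (meson finite_UnI finite_subset)
  qed
  ultimately show ?thesis by (rule that)
qed

context module_family
begin

lemma finite_unsolvable_coordinates:
  assumes ls: "lin_system R P I J c u" and K: "K \<subseteq> I" "finite K"
    and x: "solves R Q J c (\<lambda>i. coset (u i)) K x"
  shows "finite {\<alpha> \<in> A. \<nexists>y. solves R (M \<alpha>) J c (\<lambda>i. u i \<alpha>) K y}"
proof -
  interpret QL: left_module R Q by (rule Q_left_module)
  have "\<forall>j\<in>J. \<exists>v. v \<in> carrier P \<and> x j = coset v" using x by (auto simp: solves_def Q_carrier)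
  then obtain v where v: "\<And>j. j \<in> J \<Longrightarrow> v j \<in> carrier P" "\<And>j. j \<in> J \<Longrightarrow> x j = coset (v j)"
    by metis
  have cR: "\<And>i j. i \<in> I \<Longrightarrow> j \<in> J \<Longrightarrow> c i j \<in> carrier R"
    and fin: "\<And>i. i \<in> I \<Longrightarrow> finite (supp R J c i)"
    and u: "\<And>i. i \<in> I \<Longrightarrow> u i \<in> carrier P" using ls by (auto simp: lin_system_def)
  define D where "D i = {\<alpha> \<in> A. finsum (M \<alpha>) (\<lambda>j. c i j \<odot>\<^bsub>M \<alpha>\<^esub> v j \<alpha>) (supp R J c i) \<noteq> u i \<alpha>}" for i
  have "finite (D i)" if i: "i \<in> K" for i
  proof -
    have iI: "i \<in> I" using i K by blast
    have "finsum Q (\<lambda>j. c i j \<odot>\<^bsub>Q\<^esub> coset (v j)) (supp R J c i)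
        = finsum Q (\<lambda>j. c i j \<odot>\<^bsub>Q\<^esub> x j) (supp R J c i)"
      using v x cR[OF iI] by (intro QL.add.finprod_cong') (auto simp: solves_def intro!: QL.lsmult_closed)
    also have "\<dots> = coset (u i)" using x i by (simp add: solves_def)
    moreover have "finsum Q (\<lambda>j. c i j \<odot>\<^bsub>Q\<^esub> coset (v j)) (supp R J c i) = coset (u i)
        \<longleftrightarrow> finite (D i)"
      unfolding D_def using fin[OF iI] cR[OF iI] v u[OF iI] by (intro Q_lincomb_eq_coset_iff) auto
    ultimately show ?thesis by simp
  qed
  moreover have "{\<alpha> \<in> A. \<nexists>y. solves R (M \<alpha>) J c (\<lambda>i. u i \<alpha>) K y} \<subseteq> (\<Union>i\<in>K. D i)"
  proof (rule subsetI, rule ccontr)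
    fix \<alpha> assume \<alpha>: "\<alpha> \<in> {\<alpha> \<in> A. \<nexists>y. solves R (M \<alpha>) J c (\<lambda>i. u i \<alpha>) K y}" "\<alpha> \<notin> (\<Union>i\<in>K. D i)"
    then have "solves R (M \<alpha>) J c (\<lambda>i. u i \<alpha>) K (\<lambda>j. v j \<alpha>)"
      using v(1) by (auto simp: solves_def D_def P_carrier)
    then show False using \<alpha> by blast
  qed
  ultimately show ?thesis using K(2) by (meson finite_UN_I finite_subset)
qed

lemma solves_if_cofinitely_solved:
  assumes ls: "lin_system R P I J c u"
    and y: "\<And>\<alpha>. \<alpha> \<in> A \<Longrightarrow> solves R (M \<alpha>) J c (\<lambda>i. u i \<alpha>) (K \<alpha>) (y \<alpha>)"
    and cofinite: "\<And>i. i \<in> I \<Longrightarrow> finite {\<alpha> \<in> A. i \<notin> K \<alpha>}"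
  shows "solves R Q J c (\<lambda>i. coset (u i)) I (\<lambda>j. coset (\<lambda>\<alpha>\<in>A. y \<alpha> j))"
proof -
  have v: "(\<lambda>\<alpha>\<in>A. y \<alpha> j) \<in> carrier P" if "j \<in> J" for j
    using y that by (auto simp: P_restrict_carrier solves_def)
  have "finsum Q (\<lambda>j. c i j \<odot>\<^bsub>Q\<^esub> coset (\<lambda>\<alpha>\<in>A. y \<alpha> j)) (supp R J c i) = coset (u i)"
    if i: "i \<in> I" for i
  proof -
    let ?E = "{\<alpha> \<in> A. finsum (M \<alpha>) (\<lambda>j. c i j \<odot>\<^bsub>M \<alpha>\<^esub> (\<lambda>\<alpha>\<in>A. y \<alpha> j) \<alpha>) (supp R J c i) \<noteq> u i \<alpha>}"
    have "?E \<subseteq> {\<alpha> \<in> A. i \<notin> K \<alpha>}" using y by (auto simp: solves_def)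
    then have "finite ?E" using cofinite[OF i] by (rule finite_subset)
    moreover have "finsum Q (\<lambda>j. c i j \<odot>\<^bsub>Q\<^esub> coset (\<lambda>\<alpha>\<in>A. y \<alpha> j)) (supp R J c i) = coset (u i)
        \<longleftrightarrow> finite ?E"
      using ls i v by (intro Q_lincomb_eq_coset_iff) (auto simp: lin_system_def)
    ultimately show ?thesis by simp
  qed
  then show ?thesis using v coset_closed by (simp add: solves_def)
qed

lemma Q_countably_compact:
  assumes cB: "countable B"
    and cc: "\<And>\<alpha>. \<alpha> \<in> A - B \<Longrightarrow> countably_compact_idx TYPE('i) TYPE('j) R (M \<alpha>)"
  shows "countably_compact_idx TYPE('i) TYPE('j) R Q"
  unfolding countably_compact_idx_def
proof (intro allI impI)
  fix I :: "'i set" and J :: "'j set" and c m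
  assume ls: "lin_system R Q I J c m" and cI: "countable I"
    and fs: "\<forall>I0\<subseteq>I. finite I0 \<longrightarrow> (\<exists>x. solves R Q J c m I0 x)"
  have "\<forall>i\<in>I. \<exists>v. v \<in> carrier P \<and> m i = coset v" using ls by (auto simp: lin_system_def Q_carrier)
  then obtain u where u: "\<And>i. i \<in> I \<Longrightarrow> u i \<in> carrier P" "\<And>i. i \<in> I \<Longrightarrow> m i = coset (u i)"
    by metis
  have lsP: "lin_system R P I J c u" using ls u by (auto simp: lin_system_def)
  have m: "solves R Q J c m I0 = solves R Q J c (\<lambda>i. coset (u i)) I0" if "I0 \<subseteq> I" for I0
    using that u by (auto simp: solves_def fun_eq_iff)
  define S where "S \<alpha> K \<longleftrightarrow> (\<exists>y. solves R (M \<alpha>) J c (\<lambda>i. u i \<alpha>) K y)" for \<alpha> K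
  obtain K where K: "\<And>\<alpha>. \<alpha> \<in> A \<Longrightarrow> S \<alpha> (K \<alpha>)" "\<And>i. i \<in> I \<Longrightarrow> finite {\<alpha> \<in> A. i \<notin> K \<alpha>}"
  proof (rule cofinite_choice[OF cI cB, of S A])
    show "S \<alpha> K" if "S \<alpha> K'" "K \<subseteq> K'" for \<alpha> K K'
      using that by (auto simp: S_def solves_def)
    show "S \<alpha> {}" if "\<alpha> \<in> A" for \<alpha>
    proof -
      interpret left_module R "M \<alpha>" using that by simp
      show ?thesis unfolding S_def solves_def by (intro exI[of _ "\<lambda>_. \<zero>\<^bsub>M \<alpha>\<^esub>"]) simp
    qed
    show "finite {\<alpha> \<in> A. \<not> S \<alpha> K}" if K: "K \<subseteq> I" "finite K" for K
    proof -
      obtain x where "solves R Q J c m K x" using fs K by blast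
      then have "solves R Q J c (\<lambda>i. coset (u i)) K x" using m[OF K(1)] by simp
      from finite_unsolvable_coordinates[OF lsP K this] show ?thesis by (simp add: S_def)
    qed
    show "S \<alpha> I" if \<alpha>: "\<alpha> \<in> A - B" and finitely: "\<forall>K\<subseteq>I. finite K \<longrightarrow> S \<alpha> K" for \<alpha>
    proof -
      have "lin_system R (M \<alpha>) I J c (\<lambda>i. u i \<alpha>)" using lsP \<alpha> by (auto simp: lin_system_def P_carrier)
      moreover have "\<forall>K\<subseteq>I. finite K \<longrightarrow> (\<exists>y. solves R (M \<alpha>) J c (\<lambda>i. u i \<alpha>) K y)"
        using finitely by (simp add: S_def)
      ultimately show ?thesis
        using cc[OF \<alpha>, unfolded countably_compact_idx_def, rule_format, OF _ cI] by (simp add: S_def)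
    qed
  qed (rule that)
  have "\<forall>\<alpha>\<in>A. \<exists>y. solves R (M \<alpha>) J c (\<lambda>i. u i \<alpha>) (K \<alpha>) y" using K(1) by (simp add: S_def)
  then obtain y where "\<And>\<alpha>. \<alpha> \<in> A \<Longrightarrow> solves R (M \<alpha>) J c (\<lambda>i. u i \<alpha>) (K \<alpha>) (y \<alpha>)" by metis
  from solves_if_cofinitely_solved[OF lsP this K(2)] show "\<exists>x. solves R Q J c m I x"
    using m[OF order_refl] by auto
qed

end

section \<open>Countable rings: from countable to algebraic compactness\<close>

lemma solvable_with_prescribed_values:
  fixes I :: "'i set" and J :: "'j set"
  assumes lm: "left_module R M" and cc: "countably_compact_idx TYPE('i + 'j) TYPE('j) R M"
    and ls: "lin_system R M I J c m" and cI: "countable I" and cW: "countable W" and WJ: "W \<subseteq> J"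
    and g: "\<And>j. j \<in> W \<Longrightarrow> g j \<in> carrier M"
    and fs: "\<And>I0. I0 \<subseteq> I \<Longrightarrow> finite I0 \<Longrightarrow> \<exists>x. solves R M J c m I0 x \<and> (\<forall>j\<in>W. x j = g j)"
  shows "\<exists>x. solves R M J c m I x \<and> (\<forall>j\<in>W. x j = g j)"
proof -
  interpret left_module R M by (rule lm)
  define I2 :: "('i + 'j) set" where "I2 = Inl ` I \<union> Inr ` W"
  define c2 where "c2 a j = (case a of Inl i \<Rightarrow> c i j | Inr j' \<Rightarrow> if j = j' then \<one>\<^bsub>R\<^esub> else \<zero>\<^bsub>R\<^esub>)"
    for a j
  define m2 where "m2 a = (case a of Inl i \<Rightarrow> m i | Inr j' \<Rightarrow> g j')" for a
  have c2_Inl: "c2 (Inl i) = c i" and c2_Inr: "c2 (Inr j) = (\<lambda>j'. if j' = j then \<one>\<^bsub>R\<^esub> else \<zero>\<^bsub>R\<^esub>)"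
    and m2_Inl: "m2 (Inl i) = m i" and m2_Inr: "m2 (Inr j) = g j" for i j
    by (simp_all add: c2_def m2_def fun_eq_iff)
  have unit_row: "finsum M (\<lambda>j. c2 (Inr j') j \<odot>\<^bsub>M\<^esub> x j) (supp R J c2 (Inr j')) = x j'"
    if "j' \<in> J" "x j' \<in> carrier M" for j' x
    unfolding c2_Inr by (rule lincomb_unit_row[of _ _ x, OF that])
  have ball_sum: "(\<forall>a\<in>I0. E a) \<longleftrightarrow> (\<forall>i\<in>Inl -` I0. E (Inl i)) \<and> (\<forall>j\<in>Inr -` I0. E (Inr j))"
    for I0 and E :: "'i + 'j \<Rightarrow> bool"
    by (metis sumE vimageE vimageI2)
  have solves2: "solves R M J c2 m2 I0 x \<longleftrightarrow> solves R M J c m (Inl -` I0) x \<and> (\<forall>j\<in>Inr -` I0. x j = g j)"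
    if "I0 \<subseteq> I2" for I0 x
  proof -
    have "j \<in> J" if "j \<in> Inr -` I0" for j using that \<open>I0 \<subseteq> I2\<close> WJ by (auto simp: I2_def)
    then show ?thesis unfolding solves_def ball_sum[of I0]
      using unit_row by (auto simp: c2_Inl m2_Inl m2_Inr)
  qed
  have ls2: "lin_system R M I2 J c2 m2"
  proof -
    have "finite (supp R J c2 (Inr j))" for j
      by (rule finite_subset[of _ "{j}"]) (auto simp: c2_def)
    then show ?thesis using ls g by (auto simp: lin_system_def I2_def c2_def m2_def)
  qed
  have cI2: "countable I2" using cI cW by (simp add: I2_def)
  have fs2: "\<exists>x. solves R M J c2 m2 I0 x" if I0: "I0 \<subseteq> I2" "finite I0" for I0
  proof -
    have "Inl -` I0 \<subseteq> I" "finite (Inl -` I0)" "Inr -` I0 \<subseteq> W"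
      using I0 by (auto simp: I2_def intro: finite_vimageI)
    moreover obtain x where "solves R M J c m (Inl -` I0) x" "\<forall>j\<in>W. x j = g j"
      using fs calculation(1,2) by blast
    ultimately have "solves R M J c2 m2 I0 x" using solves2[OF I0(1), of x] by blast
    then show ?thesis by blast
  qed
  obtain x where "solves R M J c2 m2 I2 x"
    using cc[unfolded countably_compact_idx_def, rule_format, OF ls2 cI2 fs2] ..
  moreover have "Inl -` I2 = I" "Inr -` I2 = W" by (auto simp: I2_def)
  ultimately have "solves R M J c m I x \<and> (\<forall>j\<in>W. x j = g j)" using solves2[OF order_refl, of x] by simp
  then show ?thesis by blast
qed

definition assigned :: "('j \<times> 'q) set \<Rightarrow> 'j \<Rightarrow> 'q" where
  "assigned G j = (THE q. (j, q) \<in> G)"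

lemma assigned_eq: "single_valued G \<Longrightarrow> (j, q) \<in> G \<Longrightarrow> assigned G j = q"
  unfolding assigned_def by (blast dest: single_valuedD)

lemma assigned_in: "single_valued G \<Longrightarrow> j \<in> Domain G \<Longrightarrow> (j, assigned G j) \<in> G"
  using assigned_eq by fastforce

definition extends :: "('j \<Rightarrow> 'q) \<Rightarrow> ('j \<times> 'q) set \<Rightarrow> bool" where
  "extends x G \<longleftrightarrow> (\<forall>(j, q)\<in>G. x j = q)"

lemma extends_override: "single_valued G \<Longrightarrow> extends (override_on x (assigned G) (Domain G)) G"
  by (auto simp: extends_def override_on_def assigned_eq)

lemma solves_override:
  assumes lm: "left_module R M" and ls: "lin_system R M I J c m" and I0: "I0 \<subseteq> I"
    and x: "solves R M J c m I0 x" and G: "G \<subseteq> J \<times> carrier M" "single_valued G"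
    and agree: "\<And>i j. i \<in> I0 \<Longrightarrow> j \<in> J \<Longrightarrow> c i j \<noteq> \<zero>\<^bsub>R\<^esub> \<Longrightarrow> j \<in> Domain G \<Longrightarrow> x j = assigned G j"
  shows "solves R M J c m I0 (override_on x (assigned G) (Domain G))"
proof (rule solves_cong_support[OF lm ls I0 x])
  show "\<forall>j\<in>J. override_on x (assigned G) (Domain G) j \<in> carrier M"
    using x G assigned_in by (fastforce simp: solves_def override_on_def)
qed (auto simp: override_on_def agree)

definition admissible_assignment ::
  "'r ring \<Rightarrow> ('r, 'q) module \<Rightarrow> 'i set \<Rightarrow> 'j set \<Rightarrow> ('i \<Rightarrow> 'j \<Rightarrow> 'r) \<Rightarrow> ('i \<Rightarrow> 'q) \<Rightarrow>
    ('j \<times> 'q) set \<Rightarrow> bool" where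
  "admissible_assignment R M I J c m G \<longleftrightarrow> G \<subseteq> J \<times> carrier M \<and> single_valued G \<and>
     (\<forall>I0\<subseteq>I. finite I0 \<longrightarrow> (\<exists>x. solves R M J c m I0 x \<and> extends x G))"

text \<open>The values of \<open>x\<^sub>0\<close> in the solutions of the homogeneous system with rows
  \<open>a x\<^sub>0 + bs \<cdot> (x\<^sub>1, \<dots>, x\<^sub>n) = 0\<close>, \<open>(a, bs) \<in> set L\<close>: a pp-definable subgroup, coded by
  finitely many ring elements.\<close>

definition pp_set :: "('r, 'q) module \<Rightarrow> nat \<Rightarrow> ('r \<times> 'r list) list \<Rightarrow> 'q set" where
  "pp_set M n L = {g \<in> carrier M. \<exists>zs. length zs = n \<and> set zs \<subseteq> carrier M \<and>
     (\<forall>(a, bs)\<in>set L. length bs = n \<and>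
        a \<odot>\<^bsub>M\<^esub> g \<oplus>\<^bsub>M\<^esub> finsum M (\<lambda>k. bs ! k \<odot>\<^bsub>M\<^esub> zs ! k) {..<n} = \<zero>\<^bsub>M\<^esub>)}"

locale free_unknown = left_module R M for R :: "'r ring" and M :: "('r, 'q) module" +
  fixes I :: "'i set" and J :: "'j set" and c :: "'i \<Rightarrow> 'j \<Rightarrow> 'r" and m :: "'i \<Rightarrow> 'q"
    and G :: "('j \<times> 'q) set" and j0 :: 'j
  assumes ls: "lin_system R M I J c m"
    and admissible: "admissible_assignment R M I J c m G"
    and j0: "j0 \<in> J" "j0 \<notin> Domain G"
begin

definition admissible_values :: "'i set \<Rightarrow> 'q set" where
  "admissible_values I0 = {q. \<exists>x. solves R M J c m I0 x \<and> extends x G \<and> x j0 = q}"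

definition homogeneous_values :: "'i set \<Rightarrow> 'q set" where
  "homogeneous_values I0 =
     {g. \<exists>z. solves R M J c (\<lambda>_. \<zero>\<^bsub>M\<^esub>) I0 z \<and> (\<forall>j\<in>Domain G. z j = \<zero>\<^bsub>M\<^esub>) \<and> z j0 = g}"

lemma left_module_M: "left_module R M"
  by intro_locales

lemma coeff_closed: "i \<in> I \<Longrightarrow> j \<in> J \<Longrightarrow> c i j \<in> carrier R"
  using ls by (auto simp: lin_system_def)

lemma finite_supp: "i \<in> I \<Longrightarrow> finite (supp R J c i)"
  using ls by (auto simp: lin_system_def)

lemma rhs_closed: "i \<in> I \<Longrightarrow> m i \<in> carrier M"
  using ls by (auto simp: lin_system_def)

lemma G_subset: "G \<subseteq> J \<times> carrier M" and G_single_valued: "single_valued G"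
  using admissible by (auto simp: admissible_assignment_def)

lemma admissible_values_nonempty: "I0 \<subseteq> I \<Longrightarrow> finite I0 \<Longrightarrow> admissible_values I0 \<noteq> {}"
  using admissible by (auto simp: admissible_assignment_def admissible_values_def)

lemma admissible_values_antimono: "I0 \<subseteq> I1 \<Longrightarrow> admissible_values I1 \<subseteq> admissible_values I0"
  unfolding admissible_values_def solves_def by blast

lemma admissible_values_closed: "q \<in> admissible_values I0 \<Longrightarrow> q \<in> carrier M"
  using j0 by (auto simp: admissible_values_def solves_def)

lemma homogeneous_values_closed: "g \<in> homogeneous_values I0 \<Longrightarrow> g \<in> carrier M"
  using j0 by (auto simp: homogeneous_values_def solves_def)

lemma admissible_values_diff:
  assumes q: "q \<in> admissible_values I0" and s: "s \<in> admissible_values I0" and I0: "I0 \<subseteq> I"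
  shows "q \<ominus>\<^bsub>M\<^esub> s \<in> homogeneous_values I0"
proof -
  obtain xq where xq: "solves R M J c m I0 xq" "extends xq G" "xq j0 = q"
    using q by (auto simp: admissible_values_def)
  obtain xs where xs: "solves R M J c m I0 xs" "extends xs G" "xs j0 = s"
    using s by (auto simp: admissible_values_def)
  have xqc: "\<And>j. j \<in> J \<Longrightarrow> xq j \<in> carrier M" and xsc: "\<And>j. j \<in> J \<Longrightarrow> xs j \<in> carrier M"
    using xq xs by (auto simp: solves_def)
  define z where "z j = xq j \<ominus>\<^bsub>M\<^esub> xs j" for j
  have "finsum M (\<lambda>j. c i j \<odot>\<^bsub>M\<^esub> z j) (supp R J c i) = \<zero>\<^bsub>M\<^esub>" if i: "i \<in> I0" for i
  proof -
    have iI: "i \<in> I" using i I0 by blast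
    have "finsum M (\<lambda>j. c i j \<odot>\<^bsub>M\<^esub> z j) (supp R J c i)
        = finsum M (\<lambda>j. c i j \<odot>\<^bsub>M\<^esub> xq j) (supp R J c i) \<oplus>\<^bsub>M\<^esub> finsum M (\<lambda>j. c i j \<odot>\<^bsub>M\<^esub> (\<ominus>\<^bsub>M\<^esub> xs j)) (supp R J c i)"
      unfolding z_def a_minus_def using xqc xsc coeff_closed[OF iI] by (intro lincomb_add) auto
    also have "\<dots> = m i \<ominus>\<^bsub>M\<^esub> m i"
      using lincomb_minus[of "supp R J c i" "c i" xs] xq xs xsc coeff_closed[OF iI] i
      by (auto simp: solves_def a_minus_def)
    finally show ?thesis using rhs_closed[OF iI] by (simp add: a_minus_def M.r_neg)
  qed
  moreover have "z j = \<zero>\<^bsub>M\<^esub>" if j: "j \<in> Domain G" for j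
  proof -
    obtain q' where "(j, q') \<in> G" using j by blast
    then have "xq j = q'" "xs j = q'" "q' \<in> carrier M" using xq(2) xs(2) G_subset by (auto simp: extends_def)
    then show ?thesis by (simp add: z_def a_minus_def M.r_neg)
  qed
  moreover have "\<forall>j\<in>J. z j \<in> carrier M" using xqc xsc by (simp add: z_def)
  ultimately show ?thesis unfolding homogeneous_values_def solves_def
    by (intro CollectI exI[of _ z]) (simp add: z_def xq(3) xs(3))
qed

lemma admissible_values_add:
  assumes s: "s \<in> admissible_values I0" and g: "g \<in> homogeneous_values I0" and I0: "I0 \<subseteq> I"
  shows "s \<oplus>\<^bsub>M\<^esub> g \<in> admissible_values I0"
proof -
  obtain xs where xs: "solves R M J c m I0 xs" "extends xs G" "xs j0 = s"
    using s by (auto simp: admissible_values_def)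
  obtain z where z: "solves R M J c (\<lambda>_. \<zero>\<^bsub>M\<^esub>) I0 z" "\<forall>j\<in>Domain G. z j = \<zero>\<^bsub>M\<^esub>" "z j0 = g"
    using g by (auto simp: homogeneous_values_def)
  have xsc: "\<And>j. j \<in> J \<Longrightarrow> xs j \<in> carrier M" and zc: "\<And>j. j \<in> J \<Longrightarrow> z j \<in> carrier M"
    using xs z by (auto simp: solves_def)
  define x where "x j = xs j \<oplus>\<^bsub>M\<^esub> z j" for j
  have lincomb: "finsum M (\<lambda>j. c i j \<odot>\<^bsub>M\<^esub> x j) (supp R J c i) = m i" if i: "i \<in> I0" for i
  proof -
    have iI: "i \<in> I" using i I0 by blast
    have "finsum M (\<lambda>j. c i j \<odot>\<^bsub>M\<^esub> x j) (supp R J c i)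
        = finsum M (\<lambda>j. c i j \<odot>\<^bsub>M\<^esub> xs j) (supp R J c i) \<oplus>\<^bsub>M\<^esub> finsum M (\<lambda>j. c i j \<odot>\<^bsub>M\<^esub> z j) (supp R J c i)"
      unfolding x_def using xsc zc coeff_closed[OF iI] by (intro lincomb_add) auto
    then show ?thesis using xs z i rhs_closed[OF iI] by (simp add: solves_def)
  qed
  moreover have "extends x G" unfolding extends_def x_def
  proof (clarify)
    fix j q assume "(j, q) \<in> G"
    then have "xs j = q" "z j = \<zero>\<^bsub>M\<^esub>" "q \<in> carrier M" using xs(2) z(2) G_subset by (auto simp: extends_def)
    then show "xs j \<oplus>\<^bsub>M\<^esub> z j = q" by simp
  qed
  moreover have "solves R M J c m I0 x" unfolding solves_def using lincomb xsc zc by (simp add: x_def)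
  ultimately show ?thesis unfolding admissible_values_def
    by (intro CollectI exI[of _ x]) (simp add: x_def xs(3) z(3))
qed

lemma lincomb_split:
  assumes i: "i \<in> I" and vs: "distinct vs" "set vs \<subseteq> J" "j0 \<notin> set vs"
    and cover: "supp R J c i - Domain G \<subseteq> insert j0 (set vs)"
    and zc: "\<And>j. j \<in> J \<Longrightarrow> z j \<in> carrier M" and z0: "\<And>j. j \<in> Domain G \<Longrightarrow> z j = \<zero>\<^bsub>M\<^esub>"
  shows "finsum M (\<lambda>j. c i j \<odot>\<^bsub>M\<^esub> z j) (supp R J c i)
       = c i j0 \<odot>\<^bsub>M\<^esub> z j0 \<oplus>\<^bsub>M\<^esub> finsum M (\<lambda>k. c i (vs ! k) \<odot>\<^bsub>M\<^esub> z (vs ! k)) {..<length vs}"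
proof -
  let ?f = "\<lambda>j. c i j \<odot>\<^bsub>M\<^esub> z j"
  have fc: "\<And>j. j \<in> J \<Longrightarrow> ?f j \<in> carrier M" using coeff_closed[OF i] zc by (auto intro!: lsmult_closed)
  have "finsum M ?f (supp R J c i) = finsum M ?f (insert j0 (set vs))"
  proof (rule M.add.finprod_mono_neutral_cong)
    show "?f j = \<zero>\<^bsub>M\<^esub>" if "j \<in> insert j0 (set vs) - supp R J c i" for j
      using that vs j0 zc by (auto simp: lsmult_l_null)
    show "?f j = \<zero>\<^bsub>M\<^esub>" if "j \<in> supp R J c i - insert j0 (set vs)" for j
    proof -
      have "j \<in> Domain G" using that cover by blast
      then show ?thesis using that z0 coeff_closed[OF i] by (simp add: lsmult_r_null)
    qed
  qed (use fc vs j0 finite_supp[OF i] in auto)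
  also have "\<dots> = ?f j0 \<oplus>\<^bsub>M\<^esub> finsum M ?f (set vs)"
    using vs fc j0 by (intro M.add.finprod_insert) auto
  also have "finsum M ?f (set vs) = finsum M (\<lambda>k. ?f (vs ! k)) {..<length vs}"
  proof -
    have "set vs = nth vs ` {..<length vs}" by (auto simp: set_conv_nth)
    moreover have "inj_on (nth vs) {..<length vs}" using vs(1) by (intro inj_on_nth) auto
    then have "finsum M ?f (nth vs ` {..<length vs}) = finsum M (\<lambda>k. ?f (vs ! k)) {..<length vs}"
      using fc vs(2) nth_mem by (intro M.add.finprod_reindex) (auto simp: Pi_def subset_eq)
    ultimately show ?thesis by simp
  qed
  finally show ?thesis .
qed

context
  fixes il :: "'i list" and vs :: "'j list"
  assumes il: "set il \<subseteq> I"
    and vs: "distinct vs" "set vs \<subseteq> J" "j0 \<notin> set vs" "set vs \<inter> Domain G = {}"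
    and cover: "\<And>i. i \<in> set il \<Longrightarrow> supp R J c i - Domain G \<subseteq> insert j0 (set vs)"
begin

lemma nth_vs_in_J: "k < length vs \<Longrightarrow> vs ! k \<in> J"
  using vs(2) nth_mem by blast

lemma homogeneous_values_subset_pp_set:
  "homogeneous_values (set il) \<subseteq> pp_set M (length vs) (map (\<lambda>i. (c i j0, map (c i) vs)) il)"
proof
  fix g assume g: "g \<in> homogeneous_values (set il)"
  then obtain z where z: "solves R M J c (\<lambda>_. \<zero>\<^bsub>M\<^esub>) (set il) z" "\<forall>j\<in>Domain G. z j = \<zero>\<^bsub>M\<^esub>" "z j0 = g"
    by (auto simp: homogeneous_values_def)
  have zc: "\<And>j. j \<in> J \<Longrightarrow> z j \<in> carrier M" using z(1) by (simp add: solves_def)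
  have "c i j0 \<odot>\<^bsub>M\<^esub> g \<oplus>\<^bsub>M\<^esub> finsum M (\<lambda>k. map (c i) vs ! k \<odot>\<^bsub>M\<^esub> map z vs ! k) {..<length vs} = \<zero>\<^bsub>M\<^esub>"
    if i: "i \<in> set il" for i
  proof -
    have iI: "i \<in> I" using i il by blast
    have "finsum M (\<lambda>k. map (c i) vs ! k \<odot>\<^bsub>M\<^esub> map z vs ! k) {..<length vs}
        = finsum M (\<lambda>k. c i (vs ! k) \<odot>\<^bsub>M\<^esub> z (vs ! k)) {..<length vs}"
      using nth_vs_in_J zc coeff_closed[OF iI] by (intro M.add.finprod_cong') (auto intro!: lsmult_closed)
    moreover have "finsum M (\<lambda>j. c i j \<odot>\<^bsub>M\<^esub> z j) (supp R J c i)
        = c i j0 \<odot>\<^bsub>M\<^esub> z j0 \<oplus>\<^bsub>M\<^esub> finsum M (\<lambda>k. c i (vs ! k) \<odot>\<^bsub>M\<^esub> z (vs ! k)) {..<length vs}"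
      by (rule lincomb_split[OF iI vs(1-3) cover[OF i]]) (use zc z(2) in auto)
    ultimately show ?thesis using z(1,3) i by (simp add: solves_def)
  qed
  then show "g \<in> pp_set M (length vs) (map (\<lambda>i. (c i j0, map (c i) vs)) il)"
    using homogeneous_values_closed[OF g] zc vs(2) unfolding pp_set_def
    by (intro CollectI conjI exI[of _ "map z vs"]) auto
qed

lemma pp_set_subset_homogeneous_values:
  "pp_set M (length vs) (map (\<lambda>i. (c i j0, map (c i) vs)) il) \<subseteq> homogeneous_values (set il)"
proof
  fix g assume "g \<in> pp_set M (length vs) (map (\<lambda>i. (c i j0, map (c i) vs)) il)"
  then obtain zs where g: "g \<in> carrier M" and zs: "length zs = length vs" "set zs \<subseteq> carrier M"
    and rows: "\<And>i. i \<in> set il \<Longrightarrow>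
      c i j0 \<odot>\<^bsub>M\<^esub> g \<oplus>\<^bsub>M\<^esub> finsum M (\<lambda>k. map (c i) vs ! k \<odot>\<^bsub>M\<^esub> zs ! k) {..<length vs} = \<zero>\<^bsub>M\<^esub>"
    unfolding pp_set_def by auto
  define z where
    "z j = (if j = j0 then g else case map_of (zip vs zs) j of Some v \<Rightarrow> v | None \<Rightarrow> \<zero>\<^bsub>M\<^esub>)" for j
  have z_vs: "z (vs ! k) = zs ! k" if "k < length vs" for k
    using that vs(1,3) zs(1) map_of_zip_nth[of vs zs k] by (auto simp: z_def)
  have zs_closed: "zs ! k \<in> carrier M" if "k < length vs" for k
    using that zs nth_mem by (metis subsetD)
  have zc: "z j \<in> carrier M" for j
    using g zs by (auto simp: z_def split: option.split dest!: map_of_SomeD set_zip_rightD)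
  have z0: "z j = \<zero>\<^bsub>M\<^esub>" if "j \<in> Domain G" for j
    using that vs(4) j0(2) zs(1) by (auto simp: z_def split: option.split dest: map_of_SomeD set_zip_leftD)
  have sums: "finsum M (\<lambda>j. c i j \<odot>\<^bsub>M\<^esub> z j) (supp R J c i) = \<zero>\<^bsub>M\<^esub>" if i: "i \<in> set il" for i
  proof -
    have iI: "i \<in> I" using i il by blast
    have "finsum M (\<lambda>k. c i (vs ! k) \<odot>\<^bsub>M\<^esub> z (vs ! k)) {..<length vs}
        = finsum M (\<lambda>k. map (c i) vs ! k \<odot>\<^bsub>M\<^esub> zs ! k) {..<length vs}"
      using z_vs zs_closed nth_vs_in_J coeff_closed[OF iI] by (intro M.add.finprod_cong') (auto intro!: lsmult_closed)
    moreover have "finsum M (\<lambda>j. c i j \<odot>\<^bsub>M\<^esub> z j) (supp R J c i)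
        = c i j0 \<odot>\<^bsub>M\<^esub> z j0 \<oplus>\<^bsub>M\<^esub> finsum M (\<lambda>k. c i (vs ! k) \<odot>\<^bsub>M\<^esub> z (vs ! k)) {..<length vs}"
      by (rule lincomb_split[OF iI vs(1-3) cover[OF i]]) (use zc z0 in auto)
    ultimately show ?thesis using rows[OF i] by (simp add: z_def)
  qed
  moreover have "z j0 = g" by (simp add: z_def)
  ultimately show "g \<in> homogeneous_values (set il)"
    unfolding homogeneous_values_def solves_def using zc z0 by blast
qed

end

lemma homogeneous_values_pp_definable:
  assumes I0: "I0 \<subseteq> I" "finite I0"
  shows "\<exists>n L. set L \<subseteq> carrier R \<times> lists (carrier R) \<and> homogeneous_values I0 = pp_set M n L"
proof -
  define V0 where "V0 = (\<Union>i\<in>I0. supp R J c i) - Domain G - {j0}"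
  have "finite V0" unfolding V0_def using I0 finite_supp by auto
  then obtain vs where vs: "set vs = V0" "distinct vs" using finite_distinct_list by blast
  obtain il where il: "set il = I0" using I0(2) finite_list by blast
  have "homogeneous_values (set il) = pp_set M (length vs) (map (\<lambda>i. (c i j0, map (c i) vs)) il)"
    using vs il I0(1)
    by (intro equalityI homogeneous_values_subset_pp_set pp_set_subset_homogeneous_values)
       (auto simp: V0_def)
  moreover have "set vs \<subseteq> J" using vs by (auto simp: V0_def)
  then have "set (map (\<lambda>i. (c i j0, map (c i) vs)) il) \<subseteq> carrier R \<times> lists (carrier R)"
    using il I0(1) j0(1) by (auto intro!: coeff_closed)
  ultimately show ?thesis using il by blast
qed

lemma countable_homogeneous_values:
  assumes "countable (carrier R)"
  shows "countable (homogeneous_values ` {I0. I0 \<subseteq> I \<and> finite I0})"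
proof (rule countable_subset)
  show "homogeneous_values ` {I0. I0 \<subseteq> I \<and> finite I0}
      \<subseteq> (\<lambda>(n, L). pp_set M n L) ` (UNIV \<times> lists (carrier R \<times> lists (carrier R)))"
  proof (rule image_subsetI)
    fix I0 assume "I0 \<in> {I0. I0 \<subseteq> I \<and> finite I0}"
    then have "I0 \<subseteq> I" "finite I0" by simp_all
    then obtain n L where "set L \<subseteq> carrier R \<times> lists (carrier R)" "homogeneous_values I0 = pp_set M n L"
      using homogeneous_values_pp_definable by blast
    then show "homogeneous_values I0 \<in> (\<lambda>(n, L). pp_set M n L) ` (UNIV \<times> lists (carrier R \<times> lists (carrier R)))"
      by (intro image_eqI[of _ _ "(n, L)"]) auto
  qed
  show "countable ((\<lambda>(n, L). pp_set M n L) ` (UNIV \<times> lists (carrier R \<times> lists (carrier R))))"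
    using assms by (intro countable_image countable_SIGMA countable_lists) auto
qed

lemma countable_subsystem_representing:
  assumes "countable (carrier R)"
  obtains I' where "I' \<subseteq> I" "countable I'"
    and "\<And>I1. I1 \<subseteq> I \<Longrightarrow> finite I1 \<Longrightarrow>
      \<exists>I0\<subseteq>I'. finite I0 \<and> homogeneous_values I0 = homogeneous_values I1"
proof -
  define F where "F = {I0. I0 \<subseteq> I \<and> finite I0}"
  define rep where "rep X = (SOME I0. I0 \<in> F \<and> homogeneous_values I0 = X)" for X
  have rep: "rep X \<in> F \<and> homogeneous_values (rep X) = X" if X: "X \<in> homogeneous_values ` F" for X
  proof -
    obtain I0 where "I0 \<in> F \<and> homogeneous_values I0 = X" using X by blast
    then show ?thesis unfolding rep_def by (rule someI)
  qed
  define I' where "I' = \<Union> (rep ` homogeneous_values ` F)"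
  have "rep X \<subseteq> I" if "X \<in> homogeneous_values ` F" for X using rep[OF that] by (simp add: F_def)
  then have "I' \<subseteq> I" unfolding I'_def by blast
  moreover have "countable I'" unfolding I'_def
  proof (rule countable_UN)
    show "countable (homogeneous_values ` F)" using countable_homogeneous_values[OF assms] by (simp add: F_def)
    show "countable (rep X)" if "X \<in> homogeneous_values ` F" for X
      using rep[OF that] by (simp add: F_def countable_finite)
  qed
  moreover have "\<exists>I0\<subseteq>I'. finite I0 \<and> homogeneous_values I0 = homogeneous_values I1"
    if I1: "I1 \<subseteq> I" "finite I1" for I1
  proof -
    have "homogeneous_values I1 \<in> homogeneous_values ` F" using I1 by (simp add: F_def)
    then show ?thesis using rep unfolding I'_def F_def by blast
  qed
  ultimately show ?thesis using that by blast
qed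

lemma admissible_value_on_countable_subsystem:
  assumes cc: "countably_compact_idx TYPE('i + 'j) TYPE('j) R M"
    and I': "I' \<subseteq> I" "countable I'"
  obtains q where "\<And>I0. I0 \<subseteq> I' \<Longrightarrow> q \<in> admissible_values I0"
proof -
  define W where "W = Domain G \<inter> (\<Union>i\<in>I'. supp R J c i)"
  have cW: "countable W" unfolding W_def
    using I' finite_supp by (intro countable_Int2 countable_UN) (auto intro: countable_finite)
  have WJ: "W \<subseteq> J" using G_subset by (auto simp: W_def)
  have assigned_W: "assigned G j \<in> carrier M" if "j \<in> W" for j
    using that G_subset assigned_in[OF G_single_valued] by (auto simp: W_def)
  have ls': "lin_system R M I' J c m" using ls I'(1) by (auto simp: lin_system_def)
  have "\<exists>x. solves R M J c m I0 x \<and> (\<forall>j\<in>W. x j = assigned G j)"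
    if I0: "I0 \<subseteq> I'" "finite I0" for I0
  proof -
    have "I0 \<subseteq> I" using I0(1) I'(1) by blast
    then have "\<exists>x. solves R M J c m I0 x \<and> extends x G"
      using admissible I0(2) unfolding admissible_assignment_def by blast
    then obtain x where x: "solves R M J c m I0 x" "extends x G" by blast
    moreover have "\<forall>j\<in>W. x j = assigned G j"
      using x(2) assigned_eq[OF G_single_valued] by (auto simp: extends_def W_def)
    ultimately show ?thesis by blast
  qed
  from solvable_with_prescribed_values[OF left_module_M cc ls' I'(2) cW WJ assigned_W this]
  obtain x where x: "solves R M J c m I' x" "\<forall>j\<in>W. x j = assigned G j" by blast
  define y where "y = override_on x (assigned G) (Domain G)"
  have "solves R M J c m I' y" unfolding y_def
  proof (rule solves_override[OF left_module_M ls I'(1) x(1) G_subset G_single_valued])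
    fix i j assume "i \<in> I'" "j \<in> J" "c i j \<noteq> \<zero>\<^bsub>R\<^esub>" "j \<in> Domain G"
    then have "j \<in> W" by (auto simp: W_def)
    then show "x j = assigned G j" using x(2) by blast
  qed
  moreover have "extends y G" unfolding y_def by (rule extends_override[OF G_single_valued])
  ultimately have "y j0 \<in> admissible_values I0" if "I0 \<subseteq> I'" for I0
    using that unfolding admissible_values_def solves_def by blast
  then show ?thesis by (rule that)
qed

lemma admissible_value_exists:
  assumes cR: "countable (carrier R)" and cc: "countably_compact_idx TYPE('i + 'j) TYPE('j) R M"
  obtains q where "\<And>I1. I1 \<subseteq> I \<Longrightarrow> finite I1 \<Longrightarrow> q \<in> admissible_values I1"
proof -
  obtain I' where I': "I' \<subseteq> I" "countable I'" and rep: "\<And>I1. I1 \<subseteq> I \<Longrightarrow> finite I1 \<Longrightarrow>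
      \<exists>I0\<subseteq>I'. finite I0 \<and> homogeneous_values I0 = homogeneous_values I1"
    using countable_subsystem_representing[OF cR] by blast
  obtain q where q: "\<And>I0. I0 \<subseteq> I' \<Longrightarrow> q \<in> admissible_values I0"
    using admissible_value_on_countable_subsystem[OF cc I'] by blast
  have "q \<in> admissible_values I1" if I1: "I1 \<subseteq> I" "finite I1" for I1
  proof -
    obtain I0 where I0: "I0 \<subseteq> I'" "finite I0" "homogeneous_values I0 = homogeneous_values I1"
      using rep[OF I1] by blast
    have "I0 \<subseteq> I" using I0(1) I'(1) by blast
    \<comment> \<open>\<open>q\<close> and a value \<open>s\<close> admissible for \<open>I0 \<union> I1\<close> differ by an element of
      \<open>homogeneous_values I0 = homogeneous_values I1\<close>.\<close>
    have "admissible_values (I0 \<union> I1) \<noteq> {}"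
      using \<open>I0 \<subseteq> I\<close> I1 I0(2) by (intro admissible_values_nonempty) auto
    then obtain s where "s \<in> admissible_values (I0 \<union> I1)" by blast
    then have s0: "s \<in> admissible_values I0" and s1: "s \<in> admissible_values I1"
      using admissible_values_antimono[OF Un_upper1[of I0 I1]] admissible_values_antimono[OF Un_upper2[of I1 I0]]
      by blast+
    have "q \<ominus>\<^bsub>M\<^esub> s \<in> homogeneous_values I1"
      using admissible_values_diff[OF q[OF I0(1)] s0 \<open>I0 \<subseteq> I\<close>] I0(3) by simp
    then have "s \<oplus>\<^bsub>M\<^esub> (q \<ominus>\<^bsub>M\<^esub> s) \<in> admissible_values I1" by (rule admissible_values_add[OF s1 _ I1(1)])
    moreover have "s \<oplus>\<^bsub>M\<^esub> (q \<ominus>\<^bsub>M\<^esub> s) = q"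
      using admissible_values_closed[OF s0] admissible_values_closed[OF q[OF I0(1)]]
      by (simp add: a_minus_def M.a_lcomm M.r_neg)
    ultimately show ?thesis by simp
  qed
  then show ?thesis by (rule that)
qed

end

lemma single_valued_Union_chain:
  assumes C: "C \<in> chains X" and sv: "\<And>G. G \<in> C \<Longrightarrow> single_valued G"
  shows "single_valued (\<Union>C)"
proof (rule single_valuedI)
  fix j q q' assume "(j, q) \<in> \<Union>C" "(j, q') \<in> \<Union>C"
  then obtain G1 G2 where G: "G1 \<in> C" "G2 \<in> C" "(j, q) \<in> G1" "(j, q') \<in> G2" by blast
  with chainsD[OF C G(1,2)] sv[OF G(1)] sv[OF G(2)] show "q = q'" by (auto dest: single_valuedD)
qed

lemma solution_extending_finite_part_of_chain:
  assumes fs: "\<forall>I0\<subseteq>I. finite I0 \<longrightarrow> (\<exists>x. solves R M J c m I0 x)"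
    and C: "C \<in> chains {G. admissible_assignment R M I J c m G}"
    and F: "finite F" "F \<subseteq> \<Union>C" and I0: "I0 \<subseteq> I" "finite I0"
  obtains x where "solves R M J c m I0 x" "extends x F"
proof (cases "C = {}")
  case True
  obtain x where "solves R M J c m I0 x" using fs I0 by blast
  moreover have "extends x F" using True F(2) by (simp add: extends_def)
  ultimately show ?thesis by (rule that)
next
  case False
  have "subset.chain {G. admissible_assignment R M I J c m G} C" using C by (simp add: chains_alt_def)
  then obtain G where G: "G \<in> C" "F \<subseteq> G" using finite_subset_Union_chain[OF F False] by blast
  then have "\<exists>x. solves R M J c m I0 x \<and> extends x G"
    using chainsD2[OF C] I0 unfolding admissible_assignment_def by blast
  then obtain x where x: "solves R M J c m I0 x" "extends x G" by blast
  have "extends x F" using x(2) G(2) by (auto simp: extends_def)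
  with x(1) show ?thesis by (rule that)
qed

lemma admissible_assignment_Union_chain:
  assumes lm: "left_module R M" and ls: "lin_system R M I J c m"
    and fs: "\<forall>I0\<subseteq>I. finite I0 \<longrightarrow> (\<exists>x. solves R M J c m I0 x)"
    and C: "C \<in> chains {G. admissible_assignment R M I J c m G}"
  shows "admissible_assignment R M I J c m (\<Union>C)"
proof -
  have CA: "\<And>G. G \<in> C \<Longrightarrow> admissible_assignment R M I J c m G" using chainsD2[OF C] by blast
  have sub: "\<Union>C \<subseteq> J \<times> carrier M" using CA by (auto simp: admissible_assignment_def)
  have sv: "single_valued (\<Union>C)"
    using CA by (intro single_valued_Union_chain[OF C]) (simp add: admissible_assignment_def)
  have "\<exists>x. solves R M J c m I0 x \<and> extends x (\<Union>C)" if I0: "I0 \<subseteq> I" "finite I0" for I0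
  proof -
    define V0 where "V0 = (\<Union>i\<in>I0. supp R J c i)"
    \<comment> \<open>Only the finitely many pairs of \<open>\<Union>C\<close> with first component in \<open>V0\<close> matter for \<open>I0\<close>.\<close>
    define F where "F = \<Union>C \<inter> (V0 \<times> UNIV)"
    have "F \<subseteq> (\<lambda>j. (j, assigned (\<Union>C) j)) ` V0"
    proof
      fix p assume "p \<in> F"
      then obtain j q where "p = (j, q)" "(j, q) \<in> \<Union>C" "j \<in> V0" by (auto simp: F_def)
      then show "p \<in> (\<lambda>j. (j, assigned (\<Union>C) j)) ` V0" using assigned_eq[OF sv] by auto
    qed
    moreover have "finite V0" using I0 ls by (auto simp: V0_def lin_system_def)
    ultimately have "finite F" by (meson finite_imageI finite_subset)
    moreover have "F \<subseteq> \<Union>C" unfolding F_def by blast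
    ultimately obtain x where x: "solves R M J c m I0 x" and xF: "extends x F"
      using solution_extending_finite_part_of_chain[OF fs C _ _ I0] by blast
    have "solves R M J c m I0 (override_on x (assigned (\<Union>C)) (Domain (\<Union>C)))"
    proof (rule solves_override[OF lm ls I0(1) x sub sv])
      fix i j assume "i \<in> I0" "j \<in> J" "c i j \<noteq> \<zero>\<^bsub>R\<^esub>" "j \<in> Domain (\<Union>C)"
      then have "(j, assigned (\<Union>C) j) \<in> F" using assigned_in[OF sv] by (auto simp: F_def V0_def)
      then show "x j = assigned (\<Union>C) j" using xF by (auto simp: extends_def)
    qed
    then show ?thesis using extends_override[OF sv] by blast
  qed
  then show ?thesis using sub sv by (simp add: admissible_assignment_def)
qed

lemma maximal_admissible_assignment_total:
  fixes I :: "'i set" and J :: "'j set"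
  assumes lm: "left_module R M" and cR: "countable (carrier R)"
    and cc: "countably_compact_idx TYPE('i + 'j) TYPE('j) R M"
    and ls: "lin_system R M I J c m" and G: "admissible_assignment R M I J c m G"
    and maximal: "\<And>G'. admissible_assignment R M I J c m G' \<Longrightarrow> G \<subseteq> G' \<Longrightarrow> G' = G"
  shows "J \<subseteq> Domain G"
proof
  fix j0 assume j0: "j0 \<in> J"
  show "j0 \<in> Domain G"
  proof (rule ccontr)
    assume "j0 \<notin> Domain G"
    then interpret free_unknown R M I J c m G j0
      using lm ls G j0 by (simp add: free_unknown_def free_unknown_axioms_def)
    obtain q where q: "\<And>I1. I1 \<subseteq> I \<Longrightarrow> finite I1 \<Longrightarrow> q \<in> admissible_values I1"
      using admissible_value_exists[OF cR cc] by blast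
    have "admissible_assignment R M I J c m (insert (j0, q) G)"
      unfolding admissible_assignment_def
    proof (intro conjI allI impI)
      show "insert (j0, q) G \<subseteq> J \<times> carrier M"
        using G_subset j0 admissible_values_closed[OF q[OF empty_subsetI finite.emptyI]] by blast
      show "single_valued (insert (j0, q) G)"
        using G_single_valued \<open>j0 \<notin> Domain G\<close> by (auto simp: single_valued_def)
      fix I0 assume "I0 \<subseteq> I" "finite I0"
      then have "q \<in> admissible_values I0" by (rule q)
      then obtain x where "solves R M J c m I0 x" "extends x G" "x j0 = q"
        unfolding admissible_values_def by blast
      then show "\<exists>x. solves R M J c m I0 x \<and> extends x (insert (j0, q) G)" by (auto simp: extends_def)
    qed
    then have "insert (j0, q) G = G" by (rule maximal) blast
    then show False using \<open>j0 \<notin> Domain G\<close> by blast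
  qed
qed

lemma solves_if_total_admissible_assignment:
  assumes lm: "left_module R M" and ls: "lin_system R M I J c m"
    and G: "admissible_assignment R M I J c m G" and total: "J \<subseteq> Domain G"
  shows "solves R M J c m I (assigned G)"
proof -
  have sv: "single_valued G" and GJ: "G \<subseteq> J \<times> carrier M"
    using G by (auto simp: admissible_assignment_def)
  have closed: "\<forall>j\<in>J. assigned G j \<in> carrier M" using total GJ assigned_in[OF sv] by blast
  have "solves R M J c m {i} (assigned G)" if i: "i \<in> I" for i
  proof -
    have "\<exists>x. solves R M J c m {i} x \<and> extends x G"
      using G i unfolding admissible_assignment_def by blast
    then obtain x where x: "solves R M J c m {i} x" "extends x G" by blast
    show ?thesis
    proof (rule solves_cong_support[OF lm ls _ x(1) closed])
      show "assigned G j = x j" if "j \<in> J" for j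
      proof -
        have "(j, assigned G j) \<in> G" using that total assigned_in[OF sv] by blast
        then show ?thesis using x(2) by (auto simp: extends_def)
      qed
    qed (use i in auto)
  qed
  then show ?thesis using closed by (auto simp: solves_def)
qed

theorem alg_compact_if_countably_compact:
  assumes lm: "left_module R M" and cR: "countable (carrier R)"
    and cc: "countably_compact_idx TYPE('i + 'j) TYPE('j) R M"
  shows "alg_compact_idx TYPE('i) TYPE('j) R M"
  unfolding alg_compact_idx_def
proof (intro allI impI)
  fix I :: "'i set" and J :: "'j set" and c m
  assume ls: "lin_system R M I J c m" and fs: "\<forall>I0\<subseteq>I. finite I0 \<longrightarrow> (\<exists>x. solves R M J c m I0 x)"
  have "\<forall>C\<in>chains {G. admissible_assignment R M I J c m G}. \<Union>C \<in> {G. admissible_assignment R M I J c m G}"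
    using admissible_assignment_Union_chain[OF lm ls fs] by blast
  from Zorn_Lemma[OF this] obtain G where G: "admissible_assignment R M I J c m G"
    and maximal: "\<forall>G'\<in>{G. admissible_assignment R M I J c m G}. G \<subseteq> G' \<longrightarrow> G' = G"
    by blast
  have "J \<subseteq> Domain G" using maximal by (intro maximal_admissible_assignment_total[OF lm cR cc ls G]) auto
  then show "\<exists>x. solves R M J c m I x" using solves_if_total_admissible_assignment[OF lm ls G] by blast
qed

theorem theorem4:
  fixes R :: "'r ring" and M :: "'a \<Rightarrow> ('r, 'b) module" and A B :: "'a set"
  assumes "ring R"
    and "countable (carrier R)"
    and "\<forall>\<alpha>\<in>A. left_module R (M \<alpha>)"
    and "B \<subseteq> A"
    and "countable B"
    and "\<forall>\<alpha>\<in>B. \<not> alg_compact_idx TYPE('k) TYPE('l) R (M \<alpha>)"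
    and "\<forall>\<alpha>\<in>A - B. alg_compact_idx TYPE('r list \<times> 'b list) TYPE('r list \<times> 'b list) R (M \<alpha>)"
  shows "alg_compact_idx TYPE('i) TYPE('j) R (quot_module (prod_module A M) (dsum_carrier A M))"
proof -
  interpret module_family R A M using assms(1,3) by (intro module_family.intro) auto
  have "infinite (UNIV :: ('r list \<times> 'b list) set)"
    by (simp add: finite_prod infinite_UNIV_listI)
  then have "countably_compact_idx TYPE('i + 'j) TYPE('j) R (M \<alpha>)" if "\<alpha> \<in> A - B" for \<alpha>
    using that assms(7) by (intro countably_compact_if_alg_compact) auto
  then have "countably_compact_idx TYPE('i + 'j) TYPE('j) R Q"
    using Q_countably_compact[OF assms(5)] by blast
  then show ?thesis using alg_compact_if_countably_compact[OF Q_left_module assms(2)] by blast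
qed

end
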